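(* Let $K$ be a perfect field and let $M/K$ be obtained by strong cluster magnification from $L/K$ through a finite Galois extension $F/K$. Let $S$ be the set of distinct fields isomorphic to $L$ over $K$ and let $B=\{L_{i_1},\dots,L_{i_m}\}\subseteq S$. Then $B$ is a minimal generating set of the Galois closure of $L/K$ if and only if $B'=\{L_{i_1}F,\dots,L_{i_m}F\}$ is a minimal generating set of the Galois closure of $M/K$. In this case $|B|=|B'|$.
   Context: $\bar K$ is a fixed algebraic closure of $K$; $\tilde E$ denotes the Galois closure in $\bar K$ of a finite extension $E/K$. $M/K$ is obtained by strong cluster magnification from a subextension $L/K$ through a finite Galois extension $F/K$ if $[L:K]>2$, $\tilde L\cap F=K$ and $M=LF$; then the distinct fields isomorphic to $M$ over $K$ are exactly the fields $EF$ with $E\in S$. For an extension $E/K$, let $S_E$ be the set of distinct subfields of $\bar K$ isomorphic to $E$ over $K$; a subset $B\subseteq S_E$ is a minimal generating set of $\tilde E$ if the compositum of the fields in $B$ is $\tilde E$, while the compositum of the fields in any proper subset of $B$ is not $\tilde E$. *)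

theory Defs
  imports "HOL-Computational_Algebra.Polynomial"
begin

text \<open>All fields are subfields of an ambient field of type 'a, which will be
assumed to be an algebraic closure of the base field K.\<close>

definition subfield :: "'a::field set \<Rightarrow> bool" where
  "subfield F \<longleftrightarrow> 0 \<in> F \<and> 1 \<in> F \<and>
     (\<forall>x\<in>F. \<forall>y\<in>F. x + y \<in> F \<and> x * y \<in> F) \<and>
     (\<forall>x\<in>F. - x \<in> F) \<and> (\<forall>x\<in>F. x \<noteq> 0 \<longrightarrow> inverse x \<in> F)"

definition perfect_subfield :: "'a::field set \<Rightarrow> bool" where
  "perfect_subfield K \<longleftrightarrow> subfield K \<and>
     (CHAR('a) = 0 \<or> (\<forall>x\<in>K. \<exists>y\<in>K. y ^ CHAR('a) = x))"

definition alg_closed_type :: "'a::field itself \<Rightarrow> bool" where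
  "alg_closed_type _ \<longleftrightarrow> (\<forall>p::'a poly. degree p > 0 \<longrightarrow> (\<exists>x. poly p x = 0))"

definition algebraic_over :: "'a::field set \<Rightarrow> 'a \<Rightarrow> bool" where
  "algebraic_over K x \<longleftrightarrow> (\<exists>p. p \<noteq> 0 \<and> (\<forall>i. coeff p i \<in> K) \<and> poly p x = 0)"

definition is_alg_closure_of :: "'a::field set \<Rightarrow> bool" where
  "is_alg_closure_of K \<longleftrightarrow> subfield K \<and> alg_closed_type TYPE('a) \<and> (\<forall>x. algebraic_over K x)"

definition lin_indep_over :: "'a::field set \<Rightarrow> 'a set \<Rightarrow> bool" where
  "lin_indep_over K S \<longleftrightarrow> (\<forall>T c. finite T \<longrightarrow> T \<subseteq> S \<longrightarrow> (\<forall>x\<in>T. c x \<in> K) \<longrightarrow>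
      (\<Sum>x\<in>T. c x * x) = 0 \<longrightarrow> (\<forall>x\<in>T. c x = 0))"

definition span_over :: "'a::field set \<Rightarrow> 'a set \<Rightarrow> 'a set" where
  "span_over K S = {(\<Sum>x\<in>T. c x * x) | T c. finite T \<and> T \<subseteq> S \<and> (\<forall>x\<in>T. c x \<in> K)}"

definition is_basis_over :: "'a::field set \<Rightarrow> 'a set \<Rightarrow> 'a set \<Rightarrow> bool" where
  "is_basis_over K L B \<longleftrightarrow> B \<subseteq> L \<and> lin_indep_over K B \<and> span_over K B = L"

definition finite_ext :: "'a::field set \<Rightarrow> 'a set \<Rightarrow> bool" where
  "finite_ext K L \<longleftrightarrow> subfield K \<and> subfield L \<and> K \<subseteq> L \<and> (\<exists>B. finite B \<and> is_basis_over K L B)"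

definition ext_degree :: "'a::field set \<Rightarrow> 'a set \<Rightarrow> nat" where
  "ext_degree K L = (if finite_ext K L then card (SOME B. finite B \<and> is_basis_over K L B) else 0)"

definition K_iso :: "'a::field set \<Rightarrow> ('a \<Rightarrow> 'a) \<Rightarrow> 'a set \<Rightarrow> 'a set \<Rightarrow> bool" where
  "K_iso K \<sigma> E E' \<longleftrightarrow> bij_betw \<sigma> E E' \<and> \<sigma> 1 = 1 \<and>
     (\<forall>x\<in>E. \<forall>y\<in>E. \<sigma> (x + y) = \<sigma> x + \<sigma> y \<and> \<sigma> (x * y) = \<sigma> x * \<sigma> y) \<and>
     (\<forall>x\<in>K. \<sigma> x = x)"

definition conj_fields :: "'a::field set \<Rightarrow> 'a set \<Rightarrow> 'a set set" where
  "conj_fields K E = {E'. subfield E' \<and> K \<subseteq> E' \<and> (\<exists>\<sigma>. K_iso K \<sigma> E E')}"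

definition compositum :: "'a::field set \<Rightarrow> 'a set set \<Rightarrow> 'a set" where
  "compositum K \<B> = \<Inter>{F. subfield F \<and> K \<subseteq> F \<and> \<Union>\<B> \<subseteq> F}"

definition galois_ext :: "'a::field set \<Rightarrow> 'a set \<Rightarrow> bool" where
  "galois_ext K F \<longleftrightarrow> finite_ext K F \<and>
     {x\<in>F. \<forall>\<sigma>. K_iso K \<sigma> F F \<longrightarrow> \<sigma> x = x} = K"

definition galois_closure :: "'a::field set \<Rightarrow> 'a set \<Rightarrow> 'a set" where
  "galois_closure K E = \<Inter>{G. subfield G \<and> E \<subseteq> G \<and> galois_ext K G}"

definition strong_cluster_magnification ::
  "'a::field set \<Rightarrow> 'a set \<Rightarrow> 'a set \<Rightarrow> 'a set \<Rightarrow> bool" where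
  "strong_cluster_magnification K L F M \<longleftrightarrow>
     finite_ext K L \<and> galois_ext K F \<and> ext_degree K L > 2 \<and>
     galois_closure K L \<inter> F = K \<and> M = compositum K {L, F}"

definition minimal_generating_set :: "'a::field set \<Rightarrow> 'a set \<Rightarrow> 'a set set \<Rightarrow> bool" where
  "minimal_generating_set K E B \<longleftrightarrow> B \<subseteq> conj_fields K E \<and>
     compositum K B = galois_closure K E \<and>
     (\<forall>B'. B' \<subset> B \<longrightarrow> compositum K B' \<noteq> galois_closure K E)"

end

theory Submission
  imports Defs "HOL-Computational_Algebra.Primes"
begin

text \<open>
  Let N be the Galois closure of L; it is K adjoined all conjugates of a basis of L.
  Since F/K is Galois and N \<inter> F = K, a K-basis of F stays linearly independent over N:
  a shortest nontrivial relation with coefficients in N is moved by an embedding that fixes F,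
  and subtracting the two relations gives a shorter one. Such embeddings exist because K is
  perfect, so minimal polynomials are separable and every element outside F has another
  conjugate over F. Consequently XF \<inter> N = X for every field X between K and N, so
  X \<mapsto> XF is injective there. Moreover the Galois closure of M = LF is NF, every conjugate E
  of L yields the conjugate EF of M, and forming composita commutes with X \<mapsto> XF on
  nonempty families. Hence a family of conjugates of L generates N exactly when the family of
  the EF generates NF, and the same holds for all subfamilies, so minimality transfers and
  injectivity gives |B| = |B'|. As [L:K] > 2 we have L \<noteq> K, so the empty family generates
  neither closure.
\<close>

section \<open>Subfields and adjunction\<close>

lemma subfield_0: "subfield E \<Longrightarrow> 0 \<in> E"
  and subfield_1: "subfield E \<Longrightarrow> 1 \<in> E"
  and subfield_add: "subfield E \<Longrightarrow> x \<in> E \<Longrightarrow> y \<in> E \<Longrightarrow> x + y \<in> E"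
  and subfield_mult: "subfield E \<Longrightarrow> x \<in> E \<Longrightarrow> y \<in> E \<Longrightarrow> x * y \<in> E"
  and subfield_uminus: "subfield E \<Longrightarrow> x \<in> E \<Longrightarrow> - x \<in> E"
  by (simp_all add: subfield_def)

lemma subfield_inverse: "subfield E \<Longrightarrow> x \<in> E \<Longrightarrow> inverse x \<in> E"
  by (cases "x = 0") (auto simp add: subfield_def)

lemma subfield_diff: "subfield E \<Longrightarrow> x \<in> E \<Longrightarrow> y \<in> E \<Longrightarrow> x - y \<in> E"
  using subfield_add[of E x "- y"] subfield_uminus[of E y] by simp

lemma subfield_divide: "subfield E \<Longrightarrow> x \<in> E \<Longrightarrow> y \<in> E \<Longrightarrow> x / y \<in> E"
  using subfield_mult[of E x "inverse y"] subfield_inverse[of E y] by (simp add: divide_inverse)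

lemma subfield_power: "subfield E \<Longrightarrow> x \<in> E \<Longrightarrow> x ^ n \<in> E"
  by (induction n) (auto intro: subfield_1 subfield_mult)

lemma subfield_sum: "subfield E \<Longrightarrow> (\<And>i. i \<in> I \<Longrightarrow> f i \<in> E) \<Longrightarrow> sum f I \<in> E"
  by (induction I rule: infinite_finite_induct) (auto intro: subfield_0 subfield_add)

lemma subfield_of_nat: "subfield E \<Longrightarrow> of_nat n \<in> E"
  by (induction n) (auto intro: subfield_0 subfield_1 subfield_add)

lemma subfield_Inter: "(\<And>F. F \<in> \<F> \<Longrightarrow> subfield F) \<Longrightarrow> subfield (\<Inter>\<F>)"
  by (auto simp add: subfield_def)

definition adjoin :: "'a::field set \<Rightarrow> 'a set \<Rightarrow> 'a set" where
  "adjoin E S = \<Inter>{F. subfield F \<and> E \<subseteq> F \<and> S \<subseteq> F}"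

lemma adjoin_subfield: "subfield (adjoin E S)"
  unfolding adjoin_def by (rule subfield_Inter) auto

lemma base_subset_adjoin: "E \<subseteq> adjoin E S"
  and gens_subset_adjoin: "S \<subseteq> adjoin E S"
  and adjoin_least: "subfield F \<Longrightarrow> E \<subseteq> F \<Longrightarrow> S \<subseteq> F \<Longrightarrow> adjoin E S \<subseteq> F"
  unfolding adjoin_def by auto

lemma adjoin_mono: "E \<subseteq> E' \<Longrightarrow> S \<subseteq> S' \<Longrightarrow> adjoin E S \<subseteq> adjoin E' S'"
  unfolding adjoin_def by blast

lemma adjoin_eqI: "subfield F \<Longrightarrow> E \<subseteq> F \<Longrightarrow> S \<subseteq> F \<Longrightarrow> F \<subseteq> adjoin E S \<Longrightarrow> adjoin E S = F"
  using adjoin_least by blast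

lemma compositum_eq_adjoin: "compositum K \<B> = adjoin K (\<Union>\<B>)"
  unfolding compositum_def adjoin_def by simp

lemma adjoin_empty: "subfield E \<Longrightarrow> adjoin E {} = E"
  using base_subset_adjoin[of E "{}"] by (intro adjoin_eqI) auto

lemma adjoin_insert: "adjoin E (insert a S) = adjoin (adjoin E S) {a}"
proof (rule antisym)
  have "E \<subseteq> adjoin E S" "S \<subseteq> adjoin E S" "adjoin E S \<subseteq> adjoin (adjoin E S) {a}"
    "{a} \<subseteq> adjoin (adjoin E S) {a}"
    by (rule base_subset_adjoin gens_subset_adjoin)+
  then show "adjoin E (insert a S) \<subseteq> adjoin (adjoin E S) {a}"
    by (intro adjoin_least adjoin_subfield) auto
  show "adjoin (adjoin E S) {a} \<subseteq> adjoin E (insert a S)"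
  proof (rule adjoin_least[OF adjoin_subfield])
    show "adjoin E S \<subseteq> adjoin E (insert a S)" by (rule adjoin_mono) auto
    show "{a} \<subseteq> adjoin E (insert a S)" using gens_subset_adjoin by blast
  qed
qed

lemma adjoin_adjoin_Un: "adjoin K (adjoin K X \<union> Y) = adjoin K (X \<union> Y)"
proof (rule antisym)
  have "adjoin K X \<subseteq> adjoin K (X \<union> Y)" "Y \<subseteq> adjoin K (X \<union> Y)"
    using adjoin_mono[of K K X "X \<union> Y"] gens_subset_adjoin[of "X \<union> Y" K] by auto
  then show "adjoin K (adjoin K X \<union> Y) \<subseteq> adjoin K (X \<union> Y)"
    by (intro adjoin_least adjoin_subfield base_subset_adjoin) auto
  show "adjoin K (X \<union> Y) \<subseteq> adjoin K (adjoin K X \<union> Y)"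
    by (rule adjoin_mono) (use gens_subset_adjoin in auto)
qed

section \<open>Field homomorphisms\<close>

definition hom_on :: "'a::field set \<Rightarrow> ('a \<Rightarrow> 'a) \<Rightarrow> bool" where
  "hom_on E \<sigma> \<longleftrightarrow> \<sigma> 1 = 1 \<and> (\<forall>x\<in>E. \<forall>y\<in>E. \<sigma> (x + y) = \<sigma> x + \<sigma> y \<and> \<sigma> (x * y) = \<sigma> x * \<sigma> y)"

lemma hom_on_1: "hom_on E \<sigma> \<Longrightarrow> \<sigma> 1 = 1"
  and hom_on_add: "hom_on E \<sigma> \<Longrightarrow> x \<in> E \<Longrightarrow> y \<in> E \<Longrightarrow> \<sigma> (x + y) = \<sigma> x + \<sigma> y"
  and hom_on_mult: "hom_on E \<sigma> \<Longrightarrow> x \<in> E \<Longrightarrow> y \<in> E \<Longrightarrow> \<sigma> (x * y) = \<sigma> x * \<sigma> y"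
  by (simp_all add: hom_on_def)

lemma hom_on_subset: "hom_on E \<sigma> \<Longrightarrow> E' \<subseteq> E \<Longrightarrow> hom_on E' \<sigma>"
  unfolding hom_on_def by blast

lemma hom_on_id: "hom_on E (\<lambda>x. x)"
  by (simp add: hom_on_def)

context
  fixes E :: "'a::field set" and \<sigma>
  assumes sf: "subfield E" and hom: "hom_on E \<sigma>"
begin

lemma hom_on_0: "\<sigma> 0 = 0"
  using hom_on_add[OF hom, of 0 0] subfield_0[OF sf] by (metis add_cancel_right_right add_0)

lemma hom_on_uminus: "x \<in> E \<Longrightarrow> \<sigma> (- x) = - \<sigma> x"
  using hom_on_add[OF hom, of x "- x"] subfield_uminus[OF sf] hom_on_0
  by (metis add.commute eq_neg_iff_add_eq_0 right_minus)

lemma hom_on_diff: "x \<in> E \<Longrightarrow> y \<in> E \<Longrightarrow> \<sigma> (x - y) = \<sigma> x - \<sigma> y"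
  using hom_on_add[OF hom, of x "- y"] hom_on_uminus[of y] subfield_uminus[OF sf, of y] by simp

lemma hom_on_inverse: "x \<in> E \<Longrightarrow> \<sigma> (inverse x) = inverse (\<sigma> x)"
  using hom_on_mult[OF hom, of x "inverse x"] subfield_inverse[OF sf, of x] hom_on_1[OF hom] hom_on_0
  by (cases "x = 0") (simp_all add: inverse_unique)

lemma hom_on_eq_0_iff: "x \<in> E \<Longrightarrow> \<sigma> x = 0 \<longleftrightarrow> x = 0"
  using hom_on_mult[OF hom, of x "inverse x"] subfield_inverse[OF sf, of x] hom_on_1[OF hom] hom_on_0
  by (cases "x = 0") auto

lemma hom_on_inj: "inj_on \<sigma> E"
proof (rule inj_onI)
  fix x y assume "x \<in> E" "y \<in> E" "\<sigma> x = \<sigma> y"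
  then show "x = y"
    using hom_on_diff hom_on_eq_0_iff[of "x - y"] subfield_diff[OF sf] by simp
qed

lemma hom_on_power: "x \<in> E \<Longrightarrow> \<sigma> (x ^ n) = \<sigma> x ^ n"
  by (induction n) (auto simp: hom_on_1[OF hom] hom_on_mult[OF hom] subfield_power[OF sf])

lemma hom_on_sum: "(\<And>i. i \<in> I \<Longrightarrow> f i \<in> E) \<Longrightarrow> \<sigma> (sum f I) = (\<Sum>i\<in>I. \<sigma> (f i))"
  by (induction I rule: infinite_finite_induct) (auto simp: hom_on_0 hom_on_add[OF hom] subfield_sum[OF sf])

lemma hom_on_image_subfield: "subfield (\<sigma> ` E)"
  unfolding subfield_def
proof (intro conjI ballI impI)
  show "0 \<in> \<sigma> ` E" "1 \<in> \<sigma> ` E"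
    using hom_on_0 hom_on_1[OF hom] subfield_0[OF sf] subfield_1[OF sf] by force+
  fix x y assume "x \<in> \<sigma> ` E" "y \<in> \<sigma> ` E"
  then obtain a b where ab: "a \<in> E" "b \<in> E" "x = \<sigma> a" "y = \<sigma> b" by blast
  show "x + y \<in> \<sigma> ` E"
    using ab by (intro image_eqI[of _ \<sigma> "a + b"]) (simp_all add: hom_on_add[OF hom] subfield_add[OF sf])
  show "x * y \<in> \<sigma> ` E"
    using ab by (intro image_eqI[of _ \<sigma> "a * b"]) (simp_all add: hom_on_mult[OF hom] subfield_mult[OF sf])
next
  fix x assume "x \<in> \<sigma> ` E"
  then obtain a where a: "a \<in> E" "x = \<sigma> a" by blast
  show "- x \<in> \<sigma> ` E"
    using a by (intro image_eqI[of _ \<sigma> "- a"]) (simp_all add: hom_on_uminus subfield_uminus[OF sf])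
  show "inverse x \<in> \<sigma> ` E"
    using a by (intro image_eqI[of _ \<sigma> "inverse a"]) (simp_all add: hom_on_inverse subfield_inverse[OF sf])
qed

lemma hom_on_preimage_subfield:
  assumes "subfield W" "subfield M" "M \<subseteq> E"
  shows "subfield {z\<in>M. \<sigma> z \<in> W}"
  unfolding subfield_def
proof (intro conjI ballI impI)
  show "0 \<in> {z\<in>M. \<sigma> z \<in> W}" "1 \<in> {z\<in>M. \<sigma> z \<in> W}"
    using assms subfield_0 subfield_1 hom_on_0 hom_on_1[OF hom] by auto
  fix x y assume x: "x \<in> {z\<in>M. \<sigma> z \<in> W}" and y: "y \<in> {z\<in>M. \<sigma> z \<in> W}"
  then have "x \<in> E" "y \<in> E" using assms(3) by auto
  then show "x + y \<in> {z\<in>M. \<sigma> z \<in> W}" "x * y \<in> {z\<in>M. \<sigma> z \<in> W}"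
    using x y assms(1,2) hom_on_add[OF hom] hom_on_mult[OF hom] subfield_add subfield_mult by auto
next
  fix x assume x: "x \<in> {z\<in>M. \<sigma> z \<in> W}"
  then have "x \<in> E" using assms(3) by auto
  then show "- x \<in> {z\<in>M. \<sigma> z \<in> W}" "inverse x \<in> {z\<in>M. \<sigma> z \<in> W}"
    using x assms(1,2) hom_on_uminus hom_on_inverse subfield_uminus subfield_inverse by auto
qed

end

lemma hom_on_image_adjoin:
  assumes D: "subfield D" "hom_on D \<sigma>" and SD: "adjoin K S \<subseteq> D" and fixK: "\<And>k. k \<in> K \<Longrightarrow> \<sigma> k = k"
  shows "\<sigma> ` adjoin K S = adjoin K (\<sigma> ` S)"
proof
  have "subfield {z \<in> adjoin K S. \<sigma> z \<in> adjoin K (\<sigma> ` S)}"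
    using hom_on_preimage_subfield[OF D adjoin_subfield adjoin_subfield SD] .
  moreover have "K \<subseteq> {z \<in> adjoin K S. \<sigma> z \<in> adjoin K (\<sigma> ` S)}"
    using fixK base_subset_adjoin[of K S] base_subset_adjoin[of K "\<sigma> ` S"] by auto
  moreover have "S \<subseteq> {z \<in> adjoin K S. \<sigma> z \<in> adjoin K (\<sigma> ` S)}"
    using gens_subset_adjoin[of S K] gens_subset_adjoin[of "\<sigma> ` S" K] by auto
  ultimately show "\<sigma> ` adjoin K S \<subseteq> adjoin K (\<sigma> ` S)"
    using adjoin_least[of _ K S] by blast
  have "subfield (\<sigma> ` adjoin K S)"
    using hom_on_image_subfield[OF adjoin_subfield hom_on_subset[OF D(2) SD]] .
  moreover have "K \<subseteq> \<sigma> ` adjoin K S"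
  proof
    fix k assume "k \<in> K"
    then show "k \<in> \<sigma> ` adjoin K S"
      using fixK[of k] base_subset_adjoin[of K S] by (intro image_eqI[of k \<sigma> k]) auto
  qed
  moreover have "\<sigma> ` S \<subseteq> \<sigma> ` adjoin K S" using gens_subset_adjoin by blast
  ultimately show "adjoin K (\<sigma> ` S) \<subseteq> \<sigma> ` adjoin K S" by (rule adjoin_least)
qed

lemma K_iso_hom_on: "K_iso K \<sigma> E E' \<Longrightarrow> hom_on E \<sigma>"
  unfolding K_iso_def hom_on_def by blast

lemma K_iso_fixes: "K_iso K \<sigma> E E' \<Longrightarrow> x \<in> K \<Longrightarrow> \<sigma> x = x"
  unfolding K_iso_def by blast

lemma K_iso_image: "K_iso K \<sigma> E E' \<Longrightarrow> \<sigma> ` E = E'"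
  unfolding K_iso_def bij_betw_def by blast

lemma K_iso_id: "K_iso K id G G"
  unfolding K_iso_def by simp

lemma K_iso_comp:
  assumes "K_iso K \<sigma> G G" "K_iso K \<tau> G G"
  shows "K_iso K (\<sigma> \<circ> \<tau>) G G"
proof -
  have "bij_betw (\<sigma> \<circ> \<tau>) G G"
    using assms unfolding K_iso_def by (blast intro: bij_betw_trans)
  moreover have "\<tau> x \<in> G" if "x \<in> G" for x
    using K_iso_image[OF assms(2)] that by blast
  ultimately show ?thesis using assms unfolding K_iso_def by simp
qed

lemma K_iso_restrict:
  assumes D: "subfield D" "hom_on D \<sigma>" and XD: "X \<subseteq> D" and "\<sigma> ` X = Y" and "\<And>k. k \<in> K \<Longrightarrow> \<sigma> k = k"
  shows "K_iso K \<sigma> X Y"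
proof -
  have "inj_on \<sigma> X" using hom_on_inj[OF D] XD by (rule inj_on_subset)
  then have "bij_betw \<sigma> X Y" using assms(4) by (simp add: bij_betw_def)
  then show ?thesis using hom_on_subset[OF D(2) XD] assms(5) unfolding K_iso_def hom_on_def by blast
qed

section \<open>Polynomials over a subfield\<close>

definition poly_over :: "'a::field set \<Rightarrow> 'a poly \<Rightarrow> bool" where
  "poly_over E p \<longleftrightarrow> (\<forall>i. coeff p i \<in> E)"

lemma algebraic_over_iff_poly_over:
  "algebraic_over E x \<longleftrightarrow> (\<exists>p. poly_over E p \<and> p \<noteq> 0 \<and> poly p x = 0)"
  unfolding algebraic_over_def poly_over_def by blast

lemma poly_over_mono: "poly_over E p \<Longrightarrow> E \<subseteq> E' \<Longrightarrow> poly_over E' p"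
  by (auto simp add: poly_over_def)

lemma algebraic_over_mono: "algebraic_over E x \<Longrightarrow> E \<subseteq> E' \<Longrightarrow> algebraic_over E' x"
  unfolding algebraic_over_iff_poly_over using poly_over_mono by blast

context
  fixes E :: "'a::field set"
  assumes sf: "subfield E"
begin

lemma poly_over_0: "poly_over E 0"
  using subfield_0[OF sf] by (simp add: poly_over_def)

lemma poly_over_const: "c \<in> E \<Longrightarrow> poly_over E [:c:]"
  using subfield_0[OF sf] by (simp add: poly_over_def coeff_pCons split: nat.split)

lemma poly_over_1: "poly_over E 1"
  using poly_over_const[OF subfield_1[OF sf]] by (simp add: one_pCons)

lemma poly_over_pCons: "c \<in> E \<Longrightarrow> poly_over E p \<Longrightarrow> poly_over E (pCons c p)"
  by (simp add: poly_over_def coeff_pCons split: nat.split)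

lemma poly_over_linear: "w \<in> E \<Longrightarrow> poly_over E [:- w, 1:]"
  by (intro poly_over_pCons poly_over_const subfield_uminus[OF sf] subfield_1[OF sf])

lemma poly_over_X: "poly_over E [:0, 1:]"
  using poly_over_linear[OF subfield_0[OF sf]] by simp

lemma poly_over_add: "poly_over E p \<Longrightarrow> poly_over E q \<Longrightarrow> poly_over E (p + q)"
  and poly_over_uminus: "poly_over E p \<Longrightarrow> poly_over E (- p)"
  and poly_over_diff: "poly_over E p \<Longrightarrow> poly_over E q \<Longrightarrow> poly_over E (p - q)"
  and poly_over_smult: "c \<in> E \<Longrightarrow> poly_over E p \<Longrightarrow> poly_over E (smult c p)"
  and poly_over_monom: "c \<in> E \<Longrightarrow> poly_over E (monom c n)"
  by (simp_all add: poly_over_def coeff_monom subfield_add[OF sf] subfield_uminus[OF sf]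
      subfield_diff[OF sf] subfield_mult[OF sf] subfield_0[OF sf])

lemma poly_over_mult: "poly_over E p \<Longrightarrow> poly_over E q \<Longrightarrow> poly_over E (p * q)"
  by (simp add: poly_over_def coeff_mult subfield_sum[OF sf] subfield_mult[OF sf])

lemma poly_over_prod: "(\<And>i. i \<in> I \<Longrightarrow> poly_over E (f i)) \<Longrightarrow> poly_over E (prod f I)"
  by (induction I rule: infinite_finite_induct) (auto intro: poly_over_1 poly_over_mult)

lemma poly_over_pderiv: "poly_over E p \<Longrightarrow> poly_over E (pderiv p)"
  by (simp add: poly_over_def coeff_pderiv subfield_mult[OF sf] subfield_of_nat[OF sf]
      subfield_add[OF sf] subfield_1[OF sf])

lemma poly_over_poly: "poly_over E p \<Longrightarrow> x \<in> E \<Longrightarrow> poly p x \<in> E"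
  by (simp add: poly_over_def poly_altdef subfield_sum[OF sf] subfield_mult[OF sf] subfield_power[OF sf])

lemma poly_over_divmod:
  assumes "poly_over E m" "m \<noteq> 0"
  shows "poly_over E p \<Longrightarrow>
    \<exists>q r. poly_over E q \<and> poly_over E r \<and> p = q * m + r \<and> (r = 0 \<or> degree r < degree m)"
proof (induction "degree p" arbitrary: p rule: less_induct)
  case less
  show ?case
  proof (cases "p = 0 \<or> degree p < degree m")
    case True
    then show ?thesis using less.prems poly_over_0 by (intro exI[of _ 0] exI[of _ p]) auto
  next
    case False
    define c where "c = lead_coeff p / lead_coeff m"
    define d where "d = degree p - degree m"
    define p' where "p' = p - monom c d * m"
    have "c \<in> E" using less.prems assms(1) unfolding c_def poly_over_def by (simp add: subfield_divide[OF sf])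
    then have cm: "poly_over E (monom c d)" by (rule poly_over_monom)
    have p': "poly_over E p'" unfolding p'_def using less.prems cm assms(1)
      by (intro poly_over_diff poly_over_mult)
    have dp: "degree p = d + degree m" using False d_def by simp
    have "coeff (monom c d * m) (degree p) = lead_coeff p"
      using assms(2) by (simp add: dp coeff_monom_mult c_def)
    then have lead: "coeff p' (degree p) = 0" by (simp add: p'_def)
    have "degree (monom c d * m) \<le> degree p"
      using degree_mult_le[of "monom c d" m] degree_monom_le[of c d] dp by simp
    then have "degree p' \<le> degree p" unfolding p'_def using degree_diff_le by blast
    obtain q r where "poly_over E q" "poly_over E r" "p' = q * m + r" "r = 0 \<or> degree r < degree m"
    proof (cases "p' = 0")
      case True
      then show thesis using that[of 0 0] poly_over_0 by simp
    next
      case False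
      then have "degree p' < degree p"
        using lead \<open>degree p' \<le> degree p\<close> by (metis leading_coeff_0_iff le_neq_implies_less)
      then show thesis using less.hyps[OF _ p'] that by blast
    qed
    moreover have "p = (q + monom c d) * m + r" if "p' = q * m + r"
      using that by (simp add: p'_def algebra_simps)
    ultimately show ?thesis using poly_over_add[OF _ cm] by blast
  qed
qed

text \<open>A nonzero combination of least degree divides both polynomials.\<close>

lemma poly_over_bezout:
  assumes p: "poly_over E p" and m: "poly_over E m" "m \<noteq> 0"
  obtains g a b q1 q2 where "poly_over E g" "g \<noteq> 0" "poly_over E a" "g = a * p + b * m"
    "poly_over E q1" "m = q1 * g" "poly_over E q2" "p = q2 * g"
proof -
  define I where "I = {a * p + b * m | a b. poly_over E a \<and> poly_over E b}"
  have I_poly_over: "poly_over E g" if "g \<in> I" for g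
    using that p m unfolding I_def by (auto intro: poly_over_add poly_over_mult)
  have "p = 1 * p + 0 * m" "m = 0 * p + 1 * m" by simp_all
  then have pI: "p \<in> I" and mI: "m \<in> I" unfolding I_def using poly_over_0 poly_over_1 by blast+
  define n where "n = (LEAST n. \<exists>g\<in>I. g \<noteq> 0 \<and> degree g = n)"
  obtain g where g: "g \<in> I" "g \<noteq> 0" "degree g = n"
    using LeastI_ex[of "\<lambda>n. \<exists>g\<in>I. g \<noteq> 0 \<and> degree g = n"] mI m(2) unfolding n_def by blast
  obtain a b where ab: "poly_over E a" "poly_over E b" "g = a * p + b * m" using g(1) I_def by blast
  have divides: "\<exists>q. poly_over E q \<and> f = q * g" if f: "f \<in> I" for f
  proof -
    obtain q r where qr: "poly_over E q" "poly_over E r" "f = q * g + r" "r = 0 \<or> degree r < degree g"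
      using poly_over_divmod[OF I_poly_over[OF g(1)] g(2) I_poly_over[OF f]] by blast
    obtain a' b' where "poly_over E a'" "poly_over E b'" "f = a' * p + b' * m" using f I_def by blast
    moreover have "r = (a' - q * a) * p + (b' - q * b) * m" if "f = a' * p + b' * m"
      using qr(3) ab(3) that by (simp add: algebra_simps)
    ultimately have "r \<in> I" using qr(1) ab unfolding I_def by (blast intro: poly_over_diff poly_over_mult)
    have "r = 0"
    proof (rule ccontr)
      assume "r \<noteq> 0"
      then have "n \<le> degree r" using \<open>r \<in> I\<close> unfolding n_def by (blast intro: Least_le)
      then show False using qr(4) g(3) \<open>r \<noteq> 0\<close> by simp
    qed
    then show ?thesis using qr by auto
  qed
  show thesis using that g(2) ab I_poly_over[OF g(1)] divides[OF mI] divides[OF pI] by blast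
qed

end

context
  fixes E :: "'a::field set" and \<sigma>
  assumes sf: "subfield E" and hom: "hom_on E \<sigma>"
begin

lemma coeff_map_poly_hom_on: "coeff (map_poly \<sigma> p) i = \<sigma> (coeff p i)"
  by (simp add: coeff_map_poly hom_on_0[OF sf hom])

lemma degree_map_poly_hom_on: "poly_over E p \<Longrightarrow> degree (map_poly \<sigma> p) = degree p"
  using hom_on_eq_0_iff[OF sf hom] hom_on_0[OF sf hom]
  by (cases "p = 0") (auto intro!: map_poly_degree_eq simp: poly_over_def)

lemma map_poly_hom_on_diff:
  "poly_over E p \<Longrightarrow> poly_over E q \<Longrightarrow> map_poly \<sigma> (p - q) = map_poly \<sigma> p - map_poly \<sigma> q"
  and map_poly_hom_on_add:
  "poly_over E p \<Longrightarrow> poly_over E q \<Longrightarrow> map_poly \<sigma> (p + q) = map_poly \<sigma> p + map_poly \<sigma> q"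
  by (auto intro!: poly_eqI simp: coeff_map_poly_hom_on hom_on_diff[OF sf hom] hom_on_add[OF hom] poly_over_def)

lemma map_poly_hom_on_mult:
  "poly_over E p \<Longrightarrow> poly_over E q \<Longrightarrow> map_poly \<sigma> (p * q) = map_poly \<sigma> p * map_poly \<sigma> q"
  by (rule poly_eqI) (simp add: coeff_map_poly_hom_on coeff_mult hom_on_sum[OF sf hom]
      hom_on_mult[OF hom] poly_over_def subfield_mult[OF sf])

lemma map_poly_hom_on_prod:
  "(\<And>i. i \<in> I \<Longrightarrow> poly_over E (f i)) \<Longrightarrow> map_poly \<sigma> (prod f I) = (\<Prod>i\<in>I. map_poly \<sigma> (f i))"
  by (induction I rule: infinite_finite_induct)
    (simp_all add: hom_on_1[OF hom] hom_on_0[OF sf hom] map_poly_hom_on_mult poly_over_prod[OF sf])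

lemma map_poly_hom_on_linear: "w \<in> E \<Longrightarrow> map_poly \<sigma> [:- w, 1:] = [:- \<sigma> w, 1:]"
  by (simp add: map_poly_pCons hom_on_uminus[OF sf hom] hom_on_1[OF hom] hom_on_0[OF sf hom])

lemma poly_map_poly_hom_on: "poly_over E p \<Longrightarrow> x \<in> E \<Longrightarrow> poly (map_poly \<sigma> p) (\<sigma> x) = \<sigma> (poly p x)"
  using degree_map_poly_hom_on[of p]
  by (simp add: poly_altdef coeff_map_poly_hom_on hom_on_sum[OF sf hom] hom_on_mult[OF hom]
      hom_on_power[OF sf hom] poly_over_def subfield_mult[OF sf] subfield_power[OF sf])

end

lemma map_poly_fixed:
  assumes "\<And>i. \<sigma> (coeff p i) = coeff p i" shows "map_poly \<sigma> p = p"
proof -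
  have "\<sigma> 0 = 0" using assms[of "Suc (degree p)"] by (simp add: coeff_eq_0)
  then show ?thesis by (intro poly_eqI) (simp add: coeff_map_poly assms)
qed
section \<open>Minimal polynomials and simple extensions\<close>

lemma degree_pos_if_root:
  assumes "q \<noteq> 0" "poly q x = 0"
  shows "0 < degree q"
proof (rule ccontr)
  assume "\<not> 0 < degree q"
  then obtain c where "q = [:c:]" by (auto elim: degree_eq_zeroE)
  then show False using assms by simp
qed

definition minpoly :: "'a::field set \<Rightarrow> 'a \<Rightarrow> 'a poly" where
  "minpoly E x = (SOME m. poly_over E m \<and> lead_coeff m = 1 \<and> poly m x = 0 \<and>
      (\<forall>q. poly_over E q \<and> q \<noteq> 0 \<and> poly q x = 0 \<longrightarrow> degree m \<le> degree q))"

context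
  fixes E :: "'a::field set" and x :: 'a
  assumes sf: "subfield E" and alg: "algebraic_over E x"
begin

lemma minpoly_spec:
  "poly_over E (minpoly E x) \<and> lead_coeff (minpoly E x) = 1 \<and> poly (minpoly E x) x = 0 \<and>
    (\<forall>q. poly_over E q \<and> q \<noteq> 0 \<and> poly q x = 0 \<longrightarrow> degree (minpoly E x) \<le> degree q)"
proof -
  define n where "n = (LEAST n. \<exists>q. poly_over E q \<and> q \<noteq> 0 \<and> poly q x = 0 \<and> degree q = n)"
  obtain q where q: "poly_over E q" "q \<noteq> 0" "poly q x = 0" "degree q = n"
    using LeastI_ex[of "\<lambda>n. \<exists>q. poly_over E q \<and> q \<noteq> 0 \<and> poly q x = 0 \<and> degree q = n"] alg
    unfolding n_def algebraic_over_iff_poly_over by blast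
  have least: "n \<le> degree q'" if "poly_over E q'" "q' \<noteq> 0" "poly q' x = 0" for q'
    using that unfolding n_def by (blast intro: Least_le)
  define m where "m = smult (inverse (lead_coeff q)) q"
  have "poly_over E m"
    using q(1) unfolding m_def poly_over_def by (simp add: subfield_mult[OF sf] subfield_inverse[OF sf])
  moreover have "lead_coeff m = 1" "poly m x = 0" "degree m = n"
    using q(2,3) by (simp_all add: m_def flip: q(4))
  ultimately have "poly_over E m \<and> lead_coeff m = 1 \<and> poly m x = 0 \<and>
      (\<forall>q. poly_over E q \<and> q \<noteq> 0 \<and> poly q x = 0 \<longrightarrow> degree m \<le> degree q)"
    using least by auto
  then show ?thesis unfolding minpoly_def by (rule someI)
qed

lemma minpoly_poly_over: "poly_over E (minpoly E x)"
  and minpoly_monic: "lead_coeff (minpoly E x) = 1"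
  and minpoly_root: "poly (minpoly E x) x = 0"
  and minpoly_minimal: "poly_over E q \<Longrightarrow> q \<noteq> 0 \<Longrightarrow> poly q x = 0 \<Longrightarrow> degree (minpoly E x) \<le> degree q"
  using minpoly_spec by blast+

lemma minpoly_nonzero: "minpoly E x \<noteq> 0"
  using minpoly_monic by auto

lemma degree_minpoly_pos: "0 < degree (minpoly E x)"
  using degree_pos_if_root[OF minpoly_nonzero minpoly_root] .

lemma minpoly_dvd: "poly_over E p \<Longrightarrow> poly p x = 0 \<Longrightarrow> \<exists>k. poly_over E k \<and> p = k * minpoly E x"
proof -
  assume p: "poly_over E p" "poly p x = 0"
  obtain q r where qr: "poly_over E q" "poly_over E r" "p = q * minpoly E x + r"
    "r = 0 \<or> degree r < degree (minpoly E x)"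
    using poly_over_divmod[OF sf minpoly_poly_over minpoly_nonzero p(1)] by blast
  have "poly r x = 0" using p(2) qr(3) minpoly_root by simp
  then have "r = 0" using qr(2,4) minpoly_minimal[of r] by force
  then show ?thesis using qr by auto
qed

lemma minpoly_irreducible:
  assumes "poly_over E a" "poly_over E b" "minpoly E x = a * b"
  shows "degree a = 0 \<or> degree b = 0"
proof -
  have "a \<noteq> 0" "b \<noteq> 0" using assms(3) minpoly_nonzero by auto
  then have deg: "degree (minpoly E x) = degree a + degree b"
    using assms(3) by (simp add: degree_mult_eq)
  have "poly a x = 0 \<or> poly b x = 0" using assms(3) minpoly_root by simp
  then show ?thesis
  proof
    assume "poly a x = 0"
    then show ?thesis using minpoly_minimal[OF assms(1) \<open>a \<noteq> 0\<close>] deg by simp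
  next
    assume "poly b x = 0"
    then show ?thesis using minpoly_minimal[OF assms(2) \<open>b \<noteq> 0\<close>] deg by simp
  qed
qed

lemma degree_minpoly_1_imp_mem: "degree (minpoly E x) = 1 \<Longrightarrow> x \<in> E"
proof -
  assume d: "degree (minpoly E x) = 1"
  have "0 = coeff (minpoly E x) 0 + x"
    using minpoly_root minpoly_monic d by (simp add: poly_altdef)
  define c where "c = coeff (minpoly E x) 0"
  have "c + x = 0" using \<open>0 = coeff (minpoly E x) 0 + x\<close> unfolding c_def by simp
  then have "x = - c" by (simp add: add_eq_0_iff)
  moreover have "c \<in> E" using minpoly_poly_over unfolding c_def poly_over_def by blast
  ultimately show ?thesis using subfield_uminus[OF sf] by simp
qed

end

definition simple_ext :: "'a::field set \<Rightarrow> 'a \<Rightarrow> 'a set" where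
  "simple_ext E x = {poly p x | p. poly_over E p}"

context
  fixes E :: "'a::field set" and x :: 'a
  assumes sf: "subfield E" and alg: "algebraic_over E x"
begin

lemma simple_ext_inverse:
  assumes p: "poly_over E p" and nz: "poly p x \<noteq> 0"
  shows "inverse (poly p x) \<in> simple_ext E x"
proof -
  obtain g a b q1 q2 where g: "poly_over E g" "g \<noteq> 0" "poly_over E a" "g = a * p + b * minpoly E x"
    and q1: "poly_over E q1" "minpoly E x = q1 * g" and q2: "poly_over E q2" "p = q2 * g"
    by (rule poly_over_bezout[OF sf p minpoly_poly_over[OF sf alg] minpoly_nonzero[OF sf alg]])
  have "poly g x \<noteq> 0" using nz q2(2) by simp
  then have "poly q1 x = 0" using minpoly_root[OF sf alg] q1(2) by simp
  moreover have "q1 \<noteq> 0" using q1(2) minpoly_nonzero[OF sf alg] by auto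
  ultimately have "degree q1 \<noteq> 0" using degree_pos_if_root by blast
  then have "degree g = 0" using minpoly_irreducible[OF sf alg q1(1) g(1) q1(2)] by simp
  then obtain c where c: "g = [:c:]" by (rule degree_eq_zeroE)
  have "c \<noteq> 0" using g(2) c by simp
  have "c \<in> E" using g(1) c unfolding poly_over_def by (metis coeff_pCons_0)
  have "poly a x * poly p x = c"
    using arg_cong[OF g(4), of "\<lambda>q. poly q x"] c minpoly_root[OF sf alg] by simp
  then have "inverse (poly p x) = poly (smult (inverse c) a) x"
    using \<open>c \<noteq> 0\<close> by (simp, metis inverse_unique mult.assoc mult.commute right_inverse)
  moreover have "poly_over E (smult (inverse c) a)"
    using poly_over_smult[OF sf subfield_inverse[OF sf \<open>c \<in> E\<close>] g(3)] .
  ultimately show ?thesis unfolding simple_ext_def by blast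
qed

lemma simple_ext_subfield: "subfield (simple_ext E x)"
  unfolding subfield_def
proof (intro conjI ballI impI)
  show "0 \<in> simple_ext E x" "1 \<in> simple_ext E x"
    unfolding simple_ext_def using poly_over_0[OF sf] poly_over_1[OF sf] by force+
  fix a b assume "a \<in> simple_ext E x" "b \<in> simple_ext E x"
  then obtain p q where pq: "poly_over E p" "poly_over E q" "a = poly p x" "b = poly q x"
    unfolding simple_ext_def by blast
  have "a + b = poly (p + q) x" "a * b = poly (p * q) x" using pq by simp_all
  then show "a + b \<in> simple_ext E x" "a * b \<in> simple_ext E x"
    unfolding simple_ext_def using poly_over_add[OF sf pq(1,2)] poly_over_mult[OF sf pq(1,2)] by blast+
next
  fix a assume "a \<in> simple_ext E x"
  then obtain p where p: "poly_over E p" "a = poly p x" unfolding simple_ext_def by blast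
  have "- a = poly (- p) x" using p by simp
  then show "- a \<in> simple_ext E x" unfolding simple_ext_def using poly_over_uminus[OF sf p(1)] by blast
  show "a \<noteq> 0 \<Longrightarrow> inverse a \<in> simple_ext E x" using simple_ext_inverse p by simp
qed

lemma base_subset_simple_ext: "E \<subseteq> simple_ext E x"
proof
  fix c assume "c \<in> E"
  moreover have "c = poly [:c:] x" by simp
  ultimately show "c \<in> simple_ext E x" unfolding simple_ext_def using poly_over_const[OF sf] by blast
qed

lemma gen_in_simple_ext: "x \<in> simple_ext E x"
proof -
  have "x = poly [:0, 1:] x" by simp
  then show ?thesis unfolding simple_ext_def using poly_over_X[OF sf] by blast
qed

lemma adjoin_singleton: "adjoin E {x} = simple_ext E x"
proof (rule adjoin_eqI[OF simple_ext_subfield base_subset_simple_ext])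
  show "{x} \<subseteq> simple_ext E x" using gen_in_simple_ext by simp
  show "simple_ext E x \<subseteq> adjoin E {x}"
  proof
    fix z assume "z \<in> simple_ext E x"
    then obtain p where "poly_over E p" "z = poly p x" unfolding simple_ext_def by blast
    moreover have "x \<in> adjoin E {x}" using gens_subset_adjoin by blast
    ultimately show "z \<in> adjoin E {x}"
      using poly_over_poly[OF adjoin_subfield poly_over_mono[OF _ base_subset_adjoin]] by blast
  qed
qed

end

section \<open>Extending homomorphisms into an algebraically closed field\<close>

lemma hom_on_extend_simple:
  fixes E :: "'a::field set"
  assumes sf: "subfield E" and alg: "algebraic_over E x" and hom: "hom_on E \<sigma>"
    and y: "poly (map_poly \<sigma> (minpoly E x)) y = 0"
  shows "\<exists>\<tau>. hom_on (simple_ext E x) \<tau> \<and> (\<forall>z\<in>E. \<tau> z = \<sigma> z) \<and> \<tau> x = y"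
proof -
  define \<tau> where "\<tau> z = poly (map_poly \<sigma> (SOME p. poly_over E p \<and> poly p x = z)) y" for z
  have \<tau>_poly: "\<tau> (poly p x) = poly (map_poly \<sigma> p) y" if p: "poly_over E p" for p
  proof -
    define p0 where "p0 = (SOME p'. poly_over E p' \<and> poly p' x = poly p x)"
    have p0: "poly_over E p0" "poly p0 x = poly p x"
      using someI[of "\<lambda>p'. poly_over E p' \<and> poly p' x = poly p x" p] p unfolding p0_def by auto
    have "poly (p0 - p) x = 0" using p0(2) by simp
    then obtain k where k: "poly_over E k" "p0 - p = k * minpoly E x"
      using minpoly_dvd[OF sf alg poly_over_diff[OF sf p0(1) p]] by blast
    then have "map_poly \<sigma> p0 - map_poly \<sigma> p = map_poly \<sigma> k * map_poly \<sigma> (minpoly E x)"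
      using map_poly_hom_on_diff[OF sf hom p0(1) p] map_poly_hom_on_mult[OF sf hom k(1) minpoly_poly_over[OF sf alg]]
      by simp
    then have "poly (map_poly \<sigma> p0) y = poly (map_poly \<sigma> p) y"
      using y by (metis eq_iff_diff_eq_0 mult_zero_right poly_diff poly_mult)
    then show ?thesis unfolding \<tau>_def p0_def[symmetric] .
  qed
  have "hom_on (simple_ext E x) \<tau>"
    unfolding hom_on_def
  proof (intro conjI ballI)
    show "\<tau> 1 = 1" using \<tau>_poly[OF poly_over_1[OF sf]] hom_on_1[OF hom] by simp
    fix a b assume "a \<in> simple_ext E x" "b \<in> simple_ext E x"
    then obtain p q where pq: "poly_over E p" "poly_over E q" "a = poly p x" "b = poly q x"
      unfolding simple_ext_def by blast
    show "\<tau> (a + b) = \<tau> a + \<tau> b"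
      using \<tau>_poly[OF poly_over_add[OF sf pq(1,2)]] \<tau>_poly pq map_poly_hom_on_add[OF sf hom pq(1,2)] by simp
    show "\<tau> (a * b) = \<tau> a * \<tau> b"
      using \<tau>_poly[OF poly_over_mult[OF sf pq(1,2)]] \<tau>_poly pq map_poly_hom_on_mult[OF sf hom pq(1,2)] by simp
  qed
  moreover have "\<tau> z = \<sigma> z" if "z \<in> E" for z
    using \<tau>_poly[OF poly_over_const[OF sf that]] hom_on_0[OF sf hom] by (simp add: map_poly_pCons)
  moreover have "\<tau> x = y"
    using \<tau>_poly[OF poly_over_X[OF sf]] hom_on_0[OF sf hom] hom_on_1[OF hom] by (simp add: map_poly_pCons)
  ultimately show ?thesis by blast
qed

lemma alg_closed_type_root: "alg_closed_type TYPE('a::field) \<Longrightarrow> 0 < degree (p :: 'a poly) \<Longrightarrow> \<exists>y. poly p y = 0"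
  unfolding alg_closed_type_def by blast

lemma hom_on_extend_adjoin:
  fixes E :: "'a::field set"
  assumes ac: "alg_closed_type TYPE('a)" and sf: "subfield E" and hom: "hom_on E \<sigma>"
    and fin: "finite S" and alg: "\<And>s. s \<in> S \<Longrightarrow> algebraic_over E s"
  shows "\<exists>\<tau>. hom_on (adjoin E S) \<tau> \<and> (\<forall>z\<in>E. \<tau> z = \<sigma> z)"
  using fin alg
proof (induction S rule: finite_induct)
  case empty
  then show ?case using hom adjoin_empty[OF sf] by auto
next
  case (insert a S)
  then obtain \<tau> where \<tau>: "hom_on (adjoin E S) \<tau>" "\<forall>z\<in>E. \<tau> z = \<sigma> z" by blast
  have alg_a: "algebraic_over (adjoin E S) a"
    using algebraic_over_mono[OF insert.prems(1) base_subset_adjoin] by simp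
  have "0 < degree (map_poly \<tau> (minpoly (adjoin E S) a))"
    using degree_map_poly_hom_on[OF adjoin_subfield \<tau>(1) minpoly_poly_over[OF adjoin_subfield alg_a]]
      degree_minpoly_pos[OF adjoin_subfield alg_a] by simp
  then obtain y where "poly (map_poly \<tau> (minpoly (adjoin E S) a)) y = 0"
    using alg_closed_type_root[OF ac] by blast
  then obtain \<tau>' where \<tau>': "hom_on (simple_ext (adjoin E S) a) \<tau>'" "\<forall>z\<in>adjoin E S. \<tau>' z = \<tau> z"
    using hom_on_extend_simple[OF adjoin_subfield alg_a \<tau>(1)] by blast
  have "adjoin E (insert a S) = simple_ext (adjoin E S) a"
    using adjoin_insert[of E a S] adjoin_singleton[OF adjoin_subfield alg_a] by simp
  moreover have "\<forall>z\<in>E. \<tau>' z = \<sigma> z" using \<tau>'(2) \<tau>(2) base_subset_adjoin[of E S] by auto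
  ultimately show ?case using \<tau>'(1) by auto
qed
section \<open>Separability over a perfect field\<close>

lemma poly_eq_sum_multiples:
  fixes m :: "'a::comm_semiring_1 poly"
  assumes p: "0 < p" and dvd: "\<And>i. coeff m i \<noteq> 0 \<Longrightarrow> p dvd i"
  shows "poly m x = (\<Sum>j\<le>degree m div p. coeff m (p * j) * x ^ (p * j))"
proof -
  let ?J = "degree m div p"
  have "(\<Sum>j\<le>?J. coeff m (p * j) * x ^ (p * j)) = (\<Sum>i\<in>(\<lambda>j. p * j) ` {..?J}. coeff m i * x ^ i)"
    using p by (subst sum.reindex) (auto simp: inj_on_def)
  also have "\<dots> = (\<Sum>i\<le>degree m. coeff m i * x ^ i)"
  proof (rule sum.mono_neutral_left)
    have "p * j \<le> degree m" if "j \<le> ?J" for j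
      using mult_le_mono2[OF that, of p] times_div_less_eq_dividend[of p "degree m"] by linarith
    then show "(\<lambda>j. p * j) ` {..?J} \<subseteq> {..degree m}" by auto
    show "\<forall>i\<in>{..degree m} - (\<lambda>j. p * j) ` {..?J}. coeff m i * x ^ i = 0"
    proof (rule ballI, rule ccontr)
      fix i assume i: "i \<in> {..degree m} - (\<lambda>j. p * j) ` {..?J}" and "coeff m i * x ^ i \<noteq> 0"
      then have "coeff m i \<noteq> 0" by auto
      then have "p dvd i" by (rule dvd)
      then obtain j where j: "i = p * j" by (rule dvdE)
      then have "j = i div p" using p by simp
      then have "j \<le> ?J" using i by (simp add: div_le_mono)
      then show False using i j by blast
    qed
  qed simp
  finally show ?thesis by (simp add: poly_altdef)
qed

lemma poly_pth_root:
  fixes m :: "'a::field poly"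
  assumes sf: "subfield K" and prime: "prime CHAR('a)" and roots: "\<forall>k\<in>K. \<exists>y\<in>K. y ^ CHAR('a) = k"
    and m: "poly_over K m" "m \<noteq> 0" and dvd: "\<And>i. coeff m i \<noteq> 0 \<Longrightarrow> CHAR('a) dvd i"
  shows "\<exists>h. poly_over K h \<and> h \<noteq> 0 \<and> degree h \<le> degree m div CHAR('a) \<and>
    (\<forall>x. poly h x ^ CHAR('a) = poly m x)"
proof -
  let ?p = "CHAR('a)"
  define J where "J = degree m div ?p"
  define b where "b j = (SOME y. y \<in> K \<and> y ^ ?p = coeff m (?p * j))" for j
  have b: "b j \<in> K \<and> b j ^ ?p = coeff m (?p * j)" for j
  proof -
    have "\<exists>y. y \<in> K \<and> y ^ ?p = coeff m (?p * j)" using roots m(1) unfolding poly_over_def by blast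
    then show ?thesis unfolding b_def by (rule someI_ex)
  qed
  define h where "h = (\<Sum>j\<le>J. monom (b j) j)"
  have coeff_h: "coeff h k = (if k \<le> J then b k else 0)" for k
    unfolding h_def by (simp add: coeff_sum coeff_monom)
  have "poly_over K h" unfolding poly_over_def coeff_h using b subfield_0[OF sf] by simp
  moreover have "degree h \<le> J" by (rule degree_le) (simp add: coeff_h)
  moreover have "h \<noteq> 0"
  proof -
    have "?p * J = degree m" unfolding J_def using dvd[of "degree m"] m(2) by simp
    then have "b J ^ ?p \<noteq> 0" using b[of J] m(2) by simp
    then show ?thesis using coeff_h[of J] prime_gt_0_nat[OF prime] by auto
  qed
  moreover have "poly h x ^ ?p = poly m x" for x
  proof -
    have "poly h x ^ ?p = (\<Sum>j\<le>J. b j * x ^ j) ^ ?p"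
      unfolding h_def by (simp add: poly_sum poly_monom)
    also have "\<dots> = (\<Sum>j\<le>J. (b j * x ^ j) ^ ?p)"
      using prime by (intro freshmans_dream_sum) auto
    also have "\<dots> = (\<Sum>j\<le>J. coeff m (?p * j) * x ^ (?p * j))"
      using b by (simp add: power_mult_distrib mult.commute flip: power_mult)
    also have "\<dots> = poly m x"
      unfolding J_def using prime_gt_0_nat[OF prime] dvd by (rule poly_eq_sum_multiples[symmetric])
    finally show ?thesis .
  qed
  ultimately show ?thesis unfolding J_def by blast
qed

lemma pderiv_eq_0_char_dvd:
  fixes m :: "'a::field poly"
  assumes "pderiv m = 0" "coeff m i \<noteq> 0"
  shows "CHAR('a) dvd i"
proof (cases i)
  case (Suc j)
  have "of_nat (Suc j) * coeff m (Suc j) = 0"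
    using arg_cong[OF assms(1), of "\<lambda>q. coeff q j"] by (simp add: coeff_pderiv)
  then show ?thesis using Suc assms(2) by (metis mult_eq_0_iff of_nat_eq_0_iff_char_dvd)
qed simp

locale perfect_base =
  fixes K :: "'a::field set"
  assumes alg_closure: "is_alg_closure_of K" and perfect: "perfect_subfield K"
begin

lemma subfield_K: "subfield K"
  and alg_closed: "alg_closed_type TYPE('a)"
  and algebraic_K: "algebraic_over K x"
  using alg_closure by (simp_all add: is_alg_closure_of_def)

lemma algebraic_over_extension: "K \<subseteq> E \<Longrightarrow> algebraic_over E x"
  using algebraic_K algebraic_over_mono by blast

lemma pderiv_minpoly_nonzero: "pderiv (minpoly K x) \<noteq> 0"
proof
  let ?m = "minpoly K x" and ?p = "CHAR('a)"
  assume pd: "pderiv ?m = 0"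
  note mp = minpoly_poly_over[OF subfield_K algebraic_K[of x]] minpoly_nonzero[OF subfield_K algebraic_K[of x]]
    degree_minpoly_pos[OF subfield_K algebraic_K[of x]] minpoly_monic[OF subfield_K algebraic_K[of x]]
  have dvd: "?p dvd i" if "coeff ?m i \<noteq> 0" for i using pderiv_eq_0_char_dvd[OF pd that] .
  then have "?p dvd degree ?m" using mp(4) by simp
  then have "0 < ?p" using mp(3) by (cases "?p = 0") auto
  then have prime: "prime ?p" by (rule prime_CHAR_semidom)
  have roots: "\<forall>k\<in>K. \<exists>y\<in>K. y ^ ?p = k" using perfect \<open>0 < ?p\<close> unfolding perfect_subfield_def by auto
  obtain h where h: "poly_over K h" "h \<noteq> 0" "degree h \<le> degree ?m div ?p"
    "\<forall>y. poly h y ^ ?p = poly ?m y"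
    using poly_pth_root[OF subfield_K prime roots mp(1,2) dvd] by blast
  have "poly h x = 0" using h(4)[rule_format, of x] minpoly_root[OF subfield_K algebraic_K] \<open>0 < ?p\<close> by simp
  then have "degree ?m \<le> degree h" by (rule minpoly_minimal[OF subfield_K algebraic_K h(1,2)])
  moreover have "degree ?m div ?p < degree ?m" using mp(3) prime_ge_2_nat[OF prime] by simp
  ultimately show False using h(3) by simp
qed

lemma minpoly_separable: "poly (pderiv (minpoly K x)) x \<noteq> 0"
proof
  let ?m = "minpoly K x"
  assume "poly (pderiv ?m) x = 0"
  then have "degree ?m \<le> degree (pderiv ?m)"
    using minpoly_minimal[OF subfield_K algebraic_K] pderiv_minpoly_nonzero
      poly_over_pderiv[OF subfield_K minpoly_poly_over[OF subfield_K algebraic_K]] by blast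
  moreover have "degree (pderiv ?m) \<le> degree ?m - 1"
    by (rule degree_le) (simp add: coeff_pderiv coeff_eq_0)
  ultimately show False using degree_minpoly_pos[OF subfield_K algebraic_K, of x] by simp
qed

lemma exists_other_root:
  assumes sf: "subfield E" and KE: "K \<subseteq> E" and x: "x \<notin> E"
  shows "\<exists>y. y \<noteq> x \<and> poly (minpoly E x) y = 0"
proof -
  let ?mE = "minpoly E x" and ?mK = "minpoly K x"
  have alg: "algebraic_over E x" using algebraic_over_extension[OF KE] .
  obtain k where k: "?mK = k * ?mE"
    using minpoly_dvd[OF sf alg poly_over_mono[OF minpoly_poly_over[OF subfield_K algebraic_K] KE]
        minpoly_root[OF subfield_K algebraic_K]] by blast
  obtain q where q: "?mE = [:- x, 1:] * q" using minpoly_root[OF sf alg] poly_eq_0_iff_dvd by blast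
  have "pderiv ?mE = [:- x, 1:] * pderiv q + q * pderiv [:- x, 1:]" by (simp only: q pderiv_mult)
  then have "poly (pderiv ?mE) x = poly q x" by (simp add: pderiv_pCons)
  then have "poly (pderiv ?mK) x = poly k x * poly q x"
    using minpoly_root[OF sf alg] by (simp add: k pderiv_mult)
  then have qx: "poly q x \<noteq> 0" using minpoly_separable[of x] by auto
  have "degree ?mE \<noteq> 1" using degree_minpoly_1_imp_mem[OF sf alg] x by blast
  moreover have "q \<noteq> 0" using q minpoly_nonzero[OF sf alg] by auto
  then have "degree ?mE = degree [:- x, 1:] + degree q" unfolding q by (intro degree_mult_eq) auto
  ultimately have "0 < degree q" by simp
  then obtain y where "poly q y = 0" using alg_closed_type_root[OF alg_closed] by blast
  then show ?thesis using qx q by (intro exI[of _ y]) auto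
qed

end
section \<open>Spans and finite extensions\<close>

definition subspace_over :: "'a::field set \<Rightarrow> 'a set \<Rightarrow> bool" where
  "subspace_over K W \<longleftrightarrow> 0 \<in> W \<and> (\<forall>x\<in>W. \<forall>y\<in>W. x + y \<in> W) \<and> (\<forall>k\<in>K. \<forall>x\<in>W. k * x \<in> W)"

lemma subspace_over_sum: "subspace_over K W \<Longrightarrow> (\<And>i. i \<in> I \<Longrightarrow> f i \<in> W) \<Longrightarrow> sum f I \<in> W"
  by (induction I rule: infinite_finite_induct) (auto simp: subspace_over_def)

lemma subfield_subspace_over: "subfield V \<Longrightarrow> K \<subseteq> V \<Longrightarrow> subspace_over K V"
  unfolding subspace_over_def using subfield_0 subfield_add subfield_mult by blast

lemma sum_if_subset:
  fixes c :: "'a::field \<Rightarrow> 'a"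
  assumes "finite T" "T' \<subseteq> T"
  shows "(\<Sum>t\<in>T. (if t \<in> T' then c t else 0) * t) = (\<Sum>t\<in>T'. c t * t)"
  using assms by (intro sum.mono_neutral_cong_right) auto

lemma poly_eq_sum_lessThan:
  fixes x :: "'a::comm_semiring_1"
  assumes "degree p < n"
  shows "poly p x = (\<Sum>i<n. coeff p i * x ^ i)"
  unfolding poly_altdef using assms by (intro sum.mono_neutral_left) (auto simp: coeff_eq_0)

lemma span_over_mono_field: "K \<subseteq> K' \<Longrightarrow> span_over K S \<subseteq> span_over K' S"
  unfolding span_over_def by (auto 0 4)

context
  fixes K :: "'a::field set"
  assumes sf: "subfield K"
begin

lemma span_over_subspace: "subspace_over K (span_over K S)"
  unfolding subspace_over_def
proof (intro conjI ballI)
  show "0 \<in> span_over K S" unfolding span_over_def by (intro CollectI exI[of _ "{}"]) auto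
  fix x y assume "x \<in> span_over K S" "y \<in> span_over K S"
  then obtain T1 c1 T2 c2 where t: "finite T1" "T1 \<subseteq> S" "\<forall>t\<in>T1. c1 t \<in> K" "x = (\<Sum>t\<in>T1. c1 t * t)"
    "finite T2" "T2 \<subseteq> S" "\<forall>t\<in>T2. c2 t \<in> K" "y = (\<Sum>t\<in>T2. c2 t * t)"
    unfolding span_over_def by blast
  define c where "c t = (if t \<in> T1 then c1 t else 0) + (if t \<in> T2 then c2 t else 0)" for t
  have "(\<Sum>t\<in>T1 \<union> T2. c t * t) =
      (\<Sum>t\<in>T1 \<union> T2. (if t \<in> T1 then c1 t else 0) * t) + (\<Sum>t\<in>T1 \<union> T2. (if t \<in> T2 then c2 t else 0) * t)"
    unfolding c_def by (simp add: distrib_right sum.distrib)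
  also have "\<dots> = x + y" using t by (simp add: sum_if_subset)
  finally have "x + y = (\<Sum>t\<in>T1 \<union> T2. c t * t)" by simp
  moreover have "\<forall>t\<in>T1 \<union> T2. c t \<in> K"
    using t unfolding c_def by (auto intro: subfield_add[OF sf] subfield_0[OF sf])
  ultimately show "x + y \<in> span_over K S" unfolding span_over_def using t by blast
next
  fix k x assume k: "k \<in> K" and "x \<in> span_over K S"
  then obtain T c where t: "finite T" "T \<subseteq> S" "\<forall>t\<in>T. c t \<in> K" "x = (\<Sum>t\<in>T. c t * t)"
    unfolding span_over_def by blast
  have "k * x = (\<Sum>t\<in>T. (k * c t) * t)" using t by (simp add: sum_distrib_left mult.assoc)
  moreover have "\<forall>t\<in>T. k * c t \<in> K" using t k subfield_mult[OF sf] by blast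
  ultimately show "k * x \<in> span_over K S"
    unfolding span_over_def using t by (intro CollectI exI[of _ T] exI[of _ "\<lambda>t. k * c t"]) auto
qed

lemma span_over_smult: "k \<in> K \<Longrightarrow> x \<in> span_over K S \<Longrightarrow> k * x \<in> span_over K S"
  using span_over_subspace unfolding subspace_over_def by blast

lemma span_over_superset: "S \<subseteq> span_over K S"
proof
  fix s assume "s \<in> S"
  then show "s \<in> span_over K S"
    unfolding span_over_def using subfield_1[OF sf] by (intro CollectI exI[of _ "{s}"] exI[of _ "\<lambda>_. 1"]) auto
qed

lemma span_over_least: "subspace_over K W \<Longrightarrow> S \<subseteq> W \<Longrightarrow> span_over K S \<subseteq> W"
proof
  fix x assume W: "subspace_over K W" "S \<subseteq> W" and "x \<in> span_over K S"
  then obtain T c where t: "finite T" "T \<subseteq> S" "\<forall>t\<in>T. c t \<in> K" "x = (\<Sum>t\<in>T. c t * t)"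
    unfolding span_over_def by blast
  show "x \<in> W" unfolding t(4) using W t by (intro subspace_over_sum) (auto simp: subspace_over_def)
qed

lemma span_over_mono: "S \<subseteq> S' \<Longrightarrow> span_over K S \<subseteq> span_over K S'"
  using span_over_least[OF span_over_subspace] span_over_superset by blast

lemma span_over_times:
  assumes "u \<in> span_over K S"
  shows "u * b \<in> span_over K ((\<lambda>s. s * b) ` S)"
proof -
  let ?V = "span_over K ((\<lambda>s. s * b) ` S)"
  have "subspace_over K {v. v * b \<in> ?V}"
    using span_over_subspace[of "(\<lambda>s. s * b) ` S"] unfolding subspace_over_def
    by (auto simp: distrib_right mult.assoc)
  moreover have "S \<subseteq> {v. v * b \<in> ?V}" using span_over_superset[of "(\<lambda>s. s * b) ` S"] by auto
  ultimately have "span_over K S \<subseteq> {v. v * b \<in> ?V}" by (rule span_over_least)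
  then show ?thesis using assms by blast
qed

lemma span_over_1: "span_over K {1} = K"
proof
  show "span_over K {1} \<subseteq> K"
    by (rule span_over_least[OF subfield_subspace_over[OF sf]]) (simp_all add: subfield_1[OF sf])
  show "K \<subseteq> span_over K {1}"
  proof
    fix k assume "k \<in> K"
    then have "k * 1 \<in> span_over K {1}" using span_over_superset by (intro span_over_smult) auto
    then show "k \<in> span_over K {1}" by simp
  qed
qed

lemma span_over_contains_basis:
  "finite S \<Longrightarrow> \<exists>B\<subseteq>S. lin_indep_over K B \<and> span_over K B = span_over K S"
proof (induction "card S" arbitrary: S rule: less_induct)
  case less
  show ?case
  proof (cases "lin_indep_over K S")
    case True
    then show ?thesis by blast
  next
    case False
    then obtain T c t0 where T: "finite T" "T \<subseteq> S" "\<forall>x\<in>T. c x \<in> K" "(\<Sum>x\<in>T. c x * x) = 0"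
      and t0: "t0 \<in> T" "c t0 \<noteq> 0"
      unfolding lin_indep_over_def by blast
    let ?V = "span_over K (S - {t0})"
    have "(\<Sum>x\<in>T. c x * x) = c t0 * t0 + (\<Sum>x\<in>T - {t0}. c x * x)"
      using T(1) t0(1) by (rule sum.remove)
    then have h: "c t0 * t0 = - (\<Sum>x\<in>T - {t0}. c x * x)"
      using T(4) by (simp add: eq_neg_iff_add_eq_0)
    have "t0 = inverse (c t0) * (c t0 * t0)" using t0(2) by simp
    also have "\<dots> = - inverse (c t0) * (\<Sum>x\<in>T - {t0}. c x * x)" unfolding h by simp
    finally have t0_eq: "t0 = - inverse (c t0) * (\<Sum>x\<in>T - {t0}. c x * x)" .
    have "c x * x \<in> ?V" if "x \<in> T - {t0}" for x
      using that T(2,3) span_over_superset[of "S - {t0}"] by (intro span_over_smult) auto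
    then have "(\<Sum>x\<in>T - {t0}. c x * x) \<in> ?V"
      by (intro subspace_over_sum[OF span_over_subspace])
    moreover have "- inverse (c t0) \<in> K"
      using subfield_uminus[OF sf] subfield_inverse[OF sf] T(3) t0(1) by blast
    ultimately have "- inverse (c t0) * (\<Sum>x\<in>T - {t0}. c x * x) \<in> ?V"
      by (intro span_over_smult)
    then have "t0 \<in> ?V" by (rule ssubst[of t0 _ "\<lambda>z. z \<in> ?V", OF t0_eq])
    then have "S \<subseteq> ?V" using span_over_superset[of "S - {t0}"] by blast
    then have "span_over K S \<subseteq> ?V" by (rule span_over_least[OF span_over_subspace])
    moreover have "?V \<subseteq> span_over K S" by (rule span_over_mono) auto
    moreover have "card (S - {t0}) < card S" using less.prems T(2) t0(1) by (intro card_Diff1_less) auto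
    then obtain B where "B \<subseteq> S - {t0}" "lin_indep_over K B" "span_over K B = ?V"
      using less.hyps less.prems by blast
    ultimately show ?thesis by blast
  qed
qed

lemma finite_ext_if_finite_span:
  assumes "subfield V" "K \<subseteq> V" "finite S" "S \<subseteq> V" "span_over K S = V"
  shows "finite_ext K V"
proof -
  obtain B where "B \<subseteq> S" "lin_indep_over K B" "span_over K B = span_over K S"
    using span_over_contains_basis[OF assms(3)] by blast
  then have "finite B" "is_basis_over K V B" using assms(3-5) finite_subset[of B S]
    unfolding is_basis_over_def by auto
  then show ?thesis unfolding finite_ext_def using assms(1,2) sf by blast
qed

end

lemma adjoin_subset_ring:
  assumes sf: "subfield E" and ER: "E \<subseteq> R" and fin: "finite S" and SR: "S \<subseteq> R"
    and alg: "\<And>s. s \<in> S \<Longrightarrow> algebraic_over E s"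
    and add: "\<And>x y. x \<in> R \<Longrightarrow> y \<in> R \<Longrightarrow> x + y \<in> R"
    and mult: "\<And>x y. x \<in> R \<Longrightarrow> y \<in> R \<Longrightarrow> x * y \<in> R"
  shows "adjoin E S \<subseteq> R"
  using fin SR alg
proof (induction S rule: finite_induct)
  case empty
  then show ?case using ER adjoin_empty[OF sf] by simp
next
  case (insert a S)
  then have IH: "adjoin E S \<subseteq> R" and aR: "a \<in> R" by auto
  have alg_a: "algebraic_over (adjoin E S) a"
    using algebraic_over_mono[OF insert.prems(2) base_subset_adjoin] by simp
  have power: "a ^ i \<in> R" for i
    by (induction i) (use subfield_1[OF sf] ER aR mult in auto)
  have sum: "(\<Sum>i\<le>n. f i) \<in> R" if "\<And>i. f i \<in> R" for f and n :: nat
    using that subfield_0[OF sf] ER add by (induction n) auto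
  show ?case
  proof
    fix z assume "z \<in> adjoin E (insert a S)"
    then obtain p where p: "poly_over (adjoin E S) p" "z = poly p a"
      using adjoin_insert[of E a S] adjoin_singleton[OF adjoin_subfield alg_a]
      unfolding simple_ext_def by auto
    have "coeff p i * a ^ i \<in> R" for i
      using p(1) IH power mult unfolding poly_over_def by blast
    then show "z \<in> R" unfolding p(2) poly_altdef by (rule sum)
  qed
qed

lemma ext_degree_gt_1_not_subset:
  assumes "1 < ext_degree K L"
  shows "\<exists>l\<in>L. l \<notin> K"
proof (rule ccontr)
  assume "\<not> ?thesis"
  then have LK: "L \<subseteq> K" by blast
  have fe: "finite_ext K L" using assms unfolding ext_degree_def by (auto split: if_splits)
  then have sfK: "subfield K" unfolding finite_ext_def by blast
  define B where "B = (SOME B. finite B \<and> is_basis_over K L B)"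
  have "\<exists>B. finite B \<and> is_basis_over K L B" using fe unfolding finite_ext_def by blast
  then have B: "finite B" "is_basis_over K L B" unfolding B_def by (metis (no_types, lifting) someI_ex)+
  have "\<not> card B \<le> Suc 0" using assms fe unfolding ext_degree_def B_def by simp
  then obtain a b where ab: "a \<in> B" "b \<in> B" "a \<noteq> b" using card_le_Suc0_iff_eq[OF B(1)] by blast
  have BK: "B \<subseteq> K" and li: "lin_indep_over K B" using B(2) LK unfolding is_basis_over_def by auto
  have "b \<noteq> 0"
  proof
    assume "b = 0"
    then have "(\<Sum>x\<in>{b}. 1 * x) = 0" by simp
    then have "(\<lambda>_. 1::'a) b = 0"
      using ab(2) subfield_1[OF sfK]
      by (intro li[unfolded lin_indep_over_def, rule_format, of "{b}" "\<lambda>_. 1" b]) auto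
    then show False by simp
  qed
  define c where "c x = (if x = a then b else - a)" for x
  have "(\<Sum>x\<in>{a, b}. c x * x) = 0" "\<forall>x\<in>{a, b}. c x \<in> K"
    using ab BK subfield_uminus[OF sfK] unfolding c_def by auto
  then have "c a = 0" using ab by (intro li[unfolded lin_indep_over_def, rule_format, of "{a, b}" c a]) auto
  then show False using \<open>b \<noteq> 0\<close> by (simp add: c_def)
qed

context perfect_base
begin

lemma span_over_simple_ext:
  fixes a :: 'a
  assumes E: "subfield E" "K \<subseteq> E" and SE: "finite SE" "SE \<subseteq> E" "span_over K SE = E"
  defines "d \<equiv> degree (minpoly K a)"
  shows "span_over K ((\<lambda>(s, i). s * a ^ i) ` (SE \<times> {..<d})) = simple_ext E a"
    (is "span_over K ?S = _")
proof
  have alg: "algebraic_over E a" by (rule algebraic_over_extension[OF E(2)])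
  have "subfield (simple_ext E a)" "E \<subseteq> simple_ext E a" "a \<in> simple_ext E a"
    using simple_ext_subfield[OF E(1) alg] base_subset_simple_ext[OF E(1) alg] gen_in_simple_ext[OF E(1) alg] .
  then have "?S \<subseteq> simple_ext E a"
    using SE(2) by (auto intro!: subfield_mult[of "simple_ext E a"] subfield_power[of "simple_ext E a"])
  then show "span_over K ?S \<subseteq> simple_ext E a"
    using E(2) \<open>E \<subseteq> simple_ext E a\<close>
    by (intro span_over_least[OF subfield_K subfield_subspace_over[OF \<open>subfield (simple_ext E a)\<close>]]) auto
  show "simple_ext E a \<subseteq> span_over K ?S"
  proof
    fix z assume "z \<in> simple_ext E a"
    then obtain p where p: "poly_over E p" "z = poly p a" unfolding simple_ext_def by blast
    have m: "poly_over E (minpoly K a)"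
      using poly_over_mono[OF minpoly_poly_over[OF subfield_K algebraic_K] E(2)] .
    obtain q r where qr: "poly_over E q" "poly_over E r" "p = q * minpoly K a + r"
      "r = 0 \<or> degree r < d"
      using poly_over_divmod[OF E(1) m minpoly_nonzero[OF subfield_K algebraic_K] p(1)] d_def by blast
    have "z = poly r a" using p(2) qr(3) minpoly_root[OF subfield_K algebraic_K] by simp
    also have "\<dots> = (\<Sum>i<d. coeff r i * a ^ i)"
      using qr(4) degree_minpoly_pos[OF subfield_K algebraic_K, of a] unfolding d_def
      by (intro poly_eq_sum_lessThan) auto
    finally have z: "z = (\<Sum>i<d. coeff r i * a ^ i)" .
    have monomial_in_span: "u * a ^ i \<in> span_over K ?S" if "u \<in> E" "i < d" for u i
    proof -
      have "(\<lambda>s. s * a ^ i) ` SE \<subseteq> ?S" using that(2) by (auto intro: image_eqI[of _ _ "(_, i)"])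
      then show ?thesis
        using span_over_times[OF subfield_K, of u SE "a ^ i"] span_over_mono[OF subfield_K] that(1) SE(3)
        by blast
    qed
    show "z \<in> span_over K ?S" unfolding z
      using qr(2) by (intro subspace_over_sum[OF span_over_subspace[OF subfield_K]] monomial_in_span)
        (auto simp: poly_over_def)
  qed
qed

lemma adjoin_finite_span:
  "finite S \<Longrightarrow> \<exists>S'. finite S' \<and> S' \<subseteq> adjoin K S \<and> span_over K S' = adjoin K S"
proof (induction S rule: finite_induct)
  case empty
  then show ?case
    using span_over_1[OF subfield_K] adjoin_empty[OF subfield_K] subfield_1[OF subfield_K]
    by (intro exI[of _ "{1}"]) auto
next
  case (insert a S)
  then obtain SE where SE: "finite SE" "SE \<subseteq> adjoin K S" "span_over K SE = adjoin K S" by blast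
  have E: "subfield (adjoin K S)" "K \<subseteq> adjoin K S" by (rule adjoin_subfield, rule base_subset_adjoin)
  have alg: "algebraic_over (adjoin K S) a" by (rule algebraic_over_extension[OF E(2)])
  have "adjoin K (insert a S) = simple_ext (adjoin K S) a"
    using adjoin_insert[of K a S] adjoin_singleton[OF E(1) alg] by simp
  moreover note span_over_simple_ext[OF E SE, of a]
  moreover have "finite ((\<lambda>(s, i). s * a ^ i) ` (SE \<times> {..<degree (minpoly K a)}))" using SE(1) by simp
  ultimately show ?case using span_over_superset[OF subfield_K] by metis
qed

lemma finite_ext_adjoin: "finite S \<Longrightarrow> finite_ext K (adjoin K S)"
  using adjoin_finite_span finite_ext_if_finite_span[OF subfield_K adjoin_subfield base_subset_adjoin] by blast

lemma finite_ext_basis: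
  assumes "finite_ext K L"
  shows "\<exists>B. finite B \<and> B \<subseteq> L \<and> lin_indep_over K B \<and> span_over K B = L \<and> adjoin K B = L"
proof -
  obtain B where B: "finite B" "is_basis_over K L B" using assms unfolding finite_ext_def by blast
  have L: "subfield L" "K \<subseteq> L" using assms unfolding finite_ext_def by auto
  have "L \<subseteq> adjoin K B"
    using B(2) span_over_least[OF subfield_K subfield_subspace_over[OF adjoin_subfield base_subset_adjoin]]
      gens_subset_adjoin unfolding is_basis_over_def by blast
  then have "adjoin K B = L" using B(2) unfolding is_basis_over_def by (intro adjoin_eqI[OF L]) auto
  then show ?thesis using B unfolding is_basis_over_def by blast
qed

end
section \<open>Conjugates, normal closures and Galois extensions\<close>

lemma map_poly_prod_linear_invariant:
  assumes G: "subfield G" "hom_on G \<sigma>" and X: "finite X" "X \<subseteq> G" "\<sigma> ` X = X"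
  shows "map_poly \<sigma> (\<Prod>w\<in>X. [:- w, 1:]) = (\<Prod>w\<in>X. [:- w, 1:])"
proof -
  have "inj_on \<sigma> X" using hom_on_inj[OF G] X(2) by (rule inj_on_subset)
  have "map_poly \<sigma> (\<Prod>w\<in>X. [:- w, 1:]) = (\<Prod>w\<in>X. map_poly \<sigma> [:- w, 1:])"
    using X(2) by (intro map_poly_hom_on_prod[OF G] poly_over_linear[OF G(1)]) auto
  also have "\<dots> = (\<Prod>w\<in>X. [:- \<sigma> w, 1:])"
    using X(2) map_poly_hom_on_linear[OF G] by (intro prod.cong) auto
  also have "\<dots> = (\<Prod>w\<in>\<sigma> ` X. [:- w, 1:])"
    using prod.reindex[OF \<open>inj_on \<sigma> X\<close>, of "\<lambda>w. [:- w, 1:]"] by simp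
  finally show ?thesis unfolding X(3) .
qed

definition aut_orbit :: "'a::field set \<Rightarrow> 'a set \<Rightarrow> 'a \<Rightarrow> 'a set" where
  "aut_orbit K G g = {\<sigma> g | \<sigma>. K_iso K \<sigma> G G}"

lemma aut_orbit_subset: "g \<in> G \<Longrightarrow> aut_orbit K G g \<subseteq> G"
proof
  fix y assume "g \<in> G" "y \<in> aut_orbit K G g"
  then obtain \<sigma> where "K_iso K \<sigma> G G" "y = \<sigma> g" unfolding aut_orbit_def by blast
  then show "y \<in> G" using K_iso_image \<open>g \<in> G\<close> by blast
qed

lemma self_in_aut_orbit: "g \<in> aut_orbit K G g"
proof -
  have "g = id g" by simp
  then show ?thesis unfolding aut_orbit_def using K_iso_id[of K G] by blast
qed

lemma K_iso_image_aut_orbit: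
  assumes \<sigma>: "K_iso K \<sigma> G G" and G: "subfield G" "g \<in> G" and fin: "finite (aut_orbit K G g)"
  shows "\<sigma> ` aut_orbit K G g = aut_orbit K G g"
proof -
  have "\<sigma> (\<tau> g) \<in> aut_orbit K G g" if "K_iso K \<tau> G G" for \<tau>
  proof -
    have "\<sigma> (\<tau> g) = (\<sigma> \<circ> \<tau>) g" by simp
    then show ?thesis using K_iso_comp[OF \<sigma> that] unfolding aut_orbit_def by blast
  qed
  then have "\<sigma> ` aut_orbit K G g \<subseteq> aut_orbit K G g" unfolding aut_orbit_def by blast
  moreover have "inj_on \<sigma> (aut_orbit K G g)"
    using hom_on_inj[OF G(1) K_iso_hom_on[OF \<sigma>]] aut_orbit_subset[OF G(2)] by (rule inj_on_subset)
  ultimately show ?thesis by (intro endo_inj_surj[OF fin])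
qed

context perfect_base
begin

definition conjugates :: "'a \<Rightarrow> 'a set" where
  "conjugates x = {y. poly (minpoly K x) y = 0}"

definition normal_closure :: "'a set \<Rightarrow> 'a set" where
  "normal_closure A = adjoin K (\<Union>x\<in>A. conjugates x)"

lemma finite_conjugates: "finite (conjugates x)"
  unfolding conjugates_def by (rule poly_roots_finite[OF minpoly_nonzero[OF subfield_K algebraic_K]])

lemma mem_conjugates_self: "x \<in> conjugates x"
  unfolding conjugates_def using minpoly_root[OF subfield_K algebraic_K] by simp

lemma conjugates_subset: "y \<in> conjugates x \<Longrightarrow> conjugates y \<subseteq> conjugates x"
proof
  fix z assume "y \<in> conjugates x" "z \<in> conjugates y"
  moreover obtain k where "minpoly K x = k * minpoly K y"
    using minpoly_dvd[OF subfield_K algebraic_K minpoly_poly_over[OF subfield_K algebraic_K]]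
      \<open>y \<in> conjugates x\<close> unfolding conjugates_def by blast
  ultimately show "z \<in> conjugates x" unfolding conjugates_def by simp
qed

lemma normal_closure_subfield: "subfield (normal_closure A)"
  and K_subset_normal_closure: "K \<subseteq> normal_closure A"
  and conjugates_subset_normal_closure: "(\<Union>x\<in>A. conjugates x) \<subseteq> normal_closure A"
  unfolding normal_closure_def by (rule adjoin_subfield base_subset_adjoin gens_subset_adjoin)+

lemma subset_normal_closure: "A \<subseteq> normal_closure A"
  using conjugates_subset_normal_closure mem_conjugates_self by blast

lemma hom_on_conjugate:
  assumes D: "subfield D" "hom_on D \<sigma>" "K \<subseteq> D" and fixK: "\<And>k. k \<in> K \<Longrightarrow> \<sigma> k = k" and x: "x \<in> D"
  shows "\<sigma> x \<in> conjugates x"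
proof -
  let ?m = "minpoly K x"
  have mK: "poly_over K ?m" by (rule minpoly_poly_over[OF subfield_K algebraic_K])
  have "map_poly \<sigma> ?m = ?m" using mK fixK by (intro map_poly_fixed) (simp add: poly_over_def)
  then have "poly ?m (\<sigma> x) = \<sigma> (poly ?m x)"
    using poly_map_poly_hom_on[OF D(1,2) poly_over_mono[OF mK D(3)] x] by simp
  then show ?thesis
    unfolding conjugates_def using minpoly_root[OF subfield_K algebraic_K] hom_on_0[OF D(1,2)] by simp
qed

lemma hom_on_image_conjugates:
  assumes D: "subfield D" "hom_on D \<sigma>" "K \<subseteq> D" and fixK: "\<And>k. k \<in> K \<Longrightarrow> \<sigma> k = k"
    and R: "(\<Union>x\<in>A. conjugates x) \<subseteq> D"
  shows "\<sigma> ` (\<Union>x\<in>A. conjugates x) \<subseteq> (\<Union>x\<in>A. conjugates x)"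
proof
  fix z assume "z \<in> \<sigma> ` (\<Union>x\<in>A. conjugates x)"
  then obtain a y where y: "a \<in> A" "y \<in> conjugates a" "z = \<sigma> y" by blast
  then have "z \<in> conjugates y" using hom_on_conjugate[OF D fixK] R by blast
  then show "z \<in> (\<Union>x\<in>A. conjugates x)" using conjugates_subset[OF y(2)] y(1) by blast
qed

lemma hom_on_image_normal_closure:
  assumes D: "subfield D" "hom_on D \<sigma>" and fixK: "\<And>k. k \<in> K \<Longrightarrow> \<sigma> k = k"
    and A: "finite A" and ND: "normal_closure A \<subseteq> D"
  shows "\<sigma> ` normal_closure A = normal_closure A"
proof -
  let ?R = "\<Union>x\<in>A. conjugates x"
  have RD: "?R \<subseteq> D" using conjugates_subset_normal_closure ND by blast
  have "finite ?R" using A finite_conjugates by blast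
  moreover have "\<sigma> ` ?R \<subseteq> ?R"
    using hom_on_image_conjugates[OF D _ fixK RD] K_subset_normal_closure[of A] ND by blast
  moreover have "inj_on \<sigma> ?R" using hom_on_inj[OF D] RD by (rule inj_on_subset)
  ultimately have "\<sigma> ` ?R = ?R" by (intro endo_inj_surj)
  moreover have "\<sigma> ` adjoin K ?R = adjoin K (\<sigma> ` ?R)"
    using ND fixK unfolding normal_closure_def by (intro hom_on_image_adjoin[OF D]) auto
  ultimately show ?thesis unfolding normal_closure_def by simp
qed

lemma galois_ext_conjugates_subset:
  assumes gal: "galois_ext K G" and g: "g \<in> G"
  shows "conjugates g \<subseteq> G"
proof -
  have G: "subfield G" "K \<subseteq> G" using gal unfolding galois_ext_def finite_ext_def by auto
  let ?Orb = "aut_orbit K G g"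
  have "?Orb \<subseteq> conjugates g"
  proof
    fix y assume "y \<in> ?Orb"
    then obtain \<sigma> where \<sigma>: "K_iso K \<sigma> G G" "y = \<sigma> g" unfolding aut_orbit_def by blast
    show "y \<in> conjugates g"
      unfolding \<sigma>(2) by (rule hom_on_conjugate[OF G(1) K_iso_hom_on[OF \<sigma>(1)] G(2) K_iso_fixes[OF \<sigma>(1)] g])
  qed
  then have fin: "finite ?Orb" using finite_conjugates by (rule finite_subset)
  define P where "P = (\<Prod>w\<in>?Orb. [:- w, 1:])"
  have P: "poly_over G P"
    unfolding P_def using aut_orbit_subset[OF g]
    by (intro poly_over_prod[OF G(1)] poly_over_linear[OF G(1)]) auto
  have "\<sigma> (coeff P i) = coeff P i" if \<sigma>: "K_iso K \<sigma> G G" for \<sigma> i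
  proof -
    have "map_poly \<sigma> P = P"
      unfolding P_def using fin aut_orbit_subset[OF g] K_iso_image_aut_orbit[OF \<sigma> G(1) g fin]
      by (intro map_poly_prod_linear_invariant[OF G(1) K_iso_hom_on[OF \<sigma>]])
    then show ?thesis using coeff_map_poly_hom_on[OF G(1) K_iso_hom_on[OF \<sigma>], of P i] by simp
  qed
  then have "coeff P i \<in> {x \<in> G. \<forall>\<sigma>. K_iso K \<sigma> G G \<longrightarrow> \<sigma> x = x}" for i
    using P unfolding poly_over_def by auto
  then have "poly_over K P" using gal unfolding galois_ext_def poly_over_def by simp
  moreover have "poly P g = 0"
    unfolding P_def poly_prod using self_in_aut_orbit fin by (simp add: prod_zero_iff)
  ultimately obtain k where "P = k * minpoly K g"
    using minpoly_dvd[OF subfield_K algebraic_K] by blast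
  then have "conjugates g \<subseteq> {y. poly P y = 0}" unfolding conjugates_def by auto
  also have "\<dots> = ?Orb" unfolding P_def poly_prod using fin by (simp add: prod_zero_iff)
  finally show ?thesis using aut_orbit_subset[OF g] by blast
qed

text \<open>Send z to another root of its minimal polynomial over F, which exists by separability,
  and extend to the normal closure.\<close>

lemma exists_hom_moving:
  assumes A: "finite A" and F: "subfield F" "K \<subseteq> F" and z: "z \<in> normal_closure A" "z \<notin> F"
  obtains \<sigma> D where "subfield D" "hom_on D \<sigma>" "F \<subseteq> D" "normal_closure A \<subseteq> D" "\<And>f. f \<in> F \<Longrightarrow> \<sigma> f = f"
    "\<sigma> ` normal_closure A = normal_closure A" "\<sigma> z \<noteq> z"
proof -
  let ?R = "\<Union>x\<in>A. conjugates x"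
  have alg: "algebraic_over F z" by (rule algebraic_over_extension[OF F(2)])
  obtain y where y: "y \<noteq> z" "poly (minpoly F z) y = 0" using exists_other_root[OF F z(2)] by blast
  then obtain \<tau> where \<tau>: "hom_on (simple_ext F z) \<tau>" "\<forall>u\<in>F. \<tau> u = u" "\<tau> z = y"
    using hom_on_extend_simple[OF F(1) alg hom_on_id] by auto
  define E where "E = simple_ext F z"
  have E: "subfield E" "F \<subseteq> E" "z \<in> E"
    unfolding E_def using simple_ext_subfield[OF F(1) alg] base_subset_simple_ext[OF F(1) alg]
      gen_in_simple_ext[OF F(1) alg] by auto
  have "finite ?R" using A finite_conjugates by blast
  moreover have "algebraic_over E x" for x using E(2) F(2) by (intro algebraic_over_extension) blast
  ultimately obtain \<sigma> where \<sigma>: "hom_on (adjoin E ?R) \<sigma>" "\<forall>u\<in>E. \<sigma> u = \<tau> u"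
    using hom_on_extend_adjoin[OF alg_closed E(1) \<tau>(1)[folded E_def]] by blast
  define D where "D = adjoin E ?R"
  have "subfield D" "E \<subseteq> D" unfolding D_def by (rule adjoin_subfield, rule base_subset_adjoin)
  moreover have "normal_closure A \<subseteq> D"
    unfolding D_def normal_closure_def using E(2) F(2) by (intro adjoin_mono) auto
  ultimately have D: "subfield D" "E \<subseteq> D" "normal_closure A \<subseteq> D" by blast+
  have fixF: "\<sigma> f = f" if "f \<in> F" for f using \<sigma>(2) \<tau>(2) E(2) that by auto
  have "\<sigma> ` normal_closure A = normal_closure A"
    using F(2) by (intro hom_on_image_normal_closure[OF D(1) \<sigma>(1)[folded D_def] _ A D(3)] fixF) blast
  moreover have "\<sigma> z \<noteq> z" using \<sigma>(2) \<tau>(3) E(3) y(1) by simp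
  ultimately show thesis
    using that[OF D(1) \<sigma>(1)[folded D_def] _ D(3) fixF] D(2) E(2) by blast
qed

lemma normal_closure_galois:
  assumes A: "finite A"
  shows "galois_ext K (normal_closure A)"
proof -
  let ?N = "normal_closure A"
  have "finite_ext K ?N" unfolding normal_closure_def using A finite_conjugates
    by (intro finite_ext_adjoin) blast
  moreover have "x \<in> K" if x: "x \<in> ?N" "\<forall>\<sigma>. K_iso K \<sigma> ?N ?N \<longrightarrow> \<sigma> x = x" for x
  proof (rule ccontr)
    assume "x \<notin> K"
    then obtain \<sigma> D where \<sigma>: "subfield D" "hom_on D \<sigma>" "?N \<subseteq> D" "\<And>k. k \<in> K \<Longrightarrow> \<sigma> k = k"
      "\<sigma> ` ?N = ?N" "\<sigma> x \<noteq> x"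
      by (rule exists_hom_moving[OF A subfield_K subset_refl x(1)]) blast
    then have "K_iso K \<sigma> ?N ?N" by (intro K_iso_restrict[OF \<sigma>(1,2)]) auto
    then show False using x(2) \<sigma>(6) by blast
  qed
  ultimately show ?thesis
    unfolding galois_ext_def using K_subset_normal_closure K_iso_fixes by blast
qed

lemma normal_closure_least:
  assumes gal: "galois_ext K G" and A: "A \<subseteq> G"
  shows "normal_closure A \<subseteq> G"
proof -
  have G: "subfield G" "K \<subseteq> G" using gal unfolding galois_ext_def finite_ext_def by auto
  have "conjugates x \<subseteq> G" if "x \<in> A" for x using galois_ext_conjugates_subset[OF gal] A that by blast
  then have "(\<Union>x\<in>A. conjugates x) \<subseteq> G" by blast
  then show ?thesis unfolding normal_closure_def by (rule adjoin_least[OF G])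
qed

lemma galois_closure_eq_normal_closure:
  assumes "finite A" "A \<subseteq> L" "L \<subseteq> adjoin K A"
  shows "galois_closure K L = normal_closure A"
proof
  have "adjoin K A \<subseteq> normal_closure A"
    by (rule adjoin_least[OF normal_closure_subfield K_subset_normal_closure subset_normal_closure])
  then have "normal_closure A \<in> {G. subfield G \<and> L \<subseteq> G \<and> galois_ext K G}"
    using assms(3) normal_closure_subfield normal_closure_galois[OF assms(1)] by blast
  then show "galois_closure K L \<subseteq> normal_closure A" unfolding galois_closure_def by (rule Inter_lower)
  show "normal_closure A \<subseteq> galois_closure K L"
    unfolding galois_closure_def
  proof (rule Inter_greatest)
    fix G assume "G \<in> {G. subfield G \<and> L \<subseteq> G \<and> galois_ext K G}"
    then show "normal_closure A \<subseteq> G" using assms(2) by (intro normal_closure_least) auto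
  qed
qed

lemma galois_ext_normal_closure_basis:
  assumes gal: "galois_ext K F"
  obtains B where "finite B" "B \<subseteq> F" "lin_indep_over K B" "span_over K B = F" "F = normal_closure B"
proof -
  have "finite_ext K F" using gal unfolding galois_ext_def by blast
  then obtain B where B: "finite B" "B \<subseteq> F" "lin_indep_over K B" "span_over K B = F" "adjoin K B = F"
    using finite_ext_basis by blast
  have "normal_closure B \<subseteq> F" using normal_closure_least[OF gal B(2)] .
  moreover have "adjoin K B \<subseteq> normal_closure B"
    by (rule adjoin_least[OF normal_closure_subfield K_subset_normal_closure subset_normal_closure])
  ultimately have "F = normal_closure B" using B(5) by blast
  then show thesis using that B(1-4) by blast
qed

end
section \<open>Linear disjointness from a Galois extension\<close>

lemma hom_on_relation_diff:
  assumes D: "subfield D" "hom_on D \<sigma>" and T: "T \<subseteq> D" "\<And>t. t \<in> T \<Longrightarrow> \<sigma> t = t"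
    and c: "\<And>t. t \<in> T \<Longrightarrow> c t \<in> D" and rel: "(\<Sum>t\<in>T. c t * t) = 0"
  shows "(\<Sum>t\<in>T. (\<sigma> (c t) - c t) * t) = 0"
proof -
  have "\<sigma> (\<Sum>t\<in>T. c t * t) = (\<Sum>t\<in>T. \<sigma> (c t * t))"
    using T(1) c by (intro hom_on_sum[OF D] subfield_mult[OF D(1)]) auto
  also have "\<dots> = (\<Sum>t\<in>T. \<sigma> (c t) * t)"
  proof (rule sum.cong)
    fix t assume "t \<in> T"
    then show "\<sigma> (c t * t) = \<sigma> (c t) * t" using hom_on_mult[OF D(2) c] T by auto
  qed simp
  finally have "(\<Sum>t\<in>T. \<sigma> (c t) * t) = 0" using rel hom_on_0[OF D] by simp
  then show ?thesis using rel by (simp add: left_diff_distrib sum_subtractf)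
qed

lemma span_over_mult:
  assumes X: "subfield X" and gens: "\<And>s t. s \<in> S \<Longrightarrow> t \<in> S \<Longrightarrow> s * t \<in> span_over X S"
    and u: "u \<in> span_over X S" and w: "w \<in> span_over X S"
  shows "u * w \<in> span_over X S"
proof -
  let ?V = "span_over X S"
  have V: "subspace_over X ?V" by (rule span_over_subspace[OF X])
  have "u * t \<in> ?V" if t: "t \<in> S" for t
  proof -
    have "subspace_over X {v. v * t \<in> ?V}"
      using V unfolding subspace_over_def by (auto simp: distrib_right mult.assoc)
    moreover have "S \<subseteq> {v. v * t \<in> ?V}" using gens t by blast
    ultimately have "?V \<subseteq> {v. v * t \<in> ?V}" by (rule span_over_least[OF X])
    then show ?thesis using u by blast
  qed
  moreover have "subspace_over X {v. u * v \<in> ?V}"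
    using V unfolding subspace_over_def by (auto simp: distrib_left mult.left_commute)
  ultimately have "?V \<subseteq> {v. u * v \<in> ?V}" by (intro span_over_least[OF X]) auto
  then show ?thesis using w by blast
qed

text \<open>Comparing the coefficients of y = y * 1 in two expansions over an N-independent set.\<close>

lemma mem_if_span_lin_indep:
  assumes X: "subfield X" "X \<subseteq> N" and N: "subfield N" and li: "lin_indep_over N S"
    and y: "y \<in> span_over X S" "y \<in> N" and one: "1 \<in> span_over X S"
  shows "y \<in> X"
proof -
  obtain T a where T: "finite T" "T \<subseteq> S" "\<forall>t\<in>T. a t \<in> X" "y = (\<Sum>t\<in>T. a t * t)"
    using y(1) unfolding span_over_def by blast
  obtain T' b where T': "finite T'" "T' \<subseteq> S" "\<forall>t\<in>T'. b t \<in> X" "1 = (\<Sum>t\<in>T'. b t * t)"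
    using one unfolding span_over_def by blast
  define a' where "a' t = (if t \<in> T then a t else 0)" for t
  define b' where "b' t = (if t \<in> T' then b t else 0)" for t
  define e where "e t = a' t - y * b' t" for t
  have "(\<Sum>t\<in>T \<union> T'. a' t * t) = y" "(\<Sum>t\<in>T \<union> T'. b' t * t) = 1"
    unfolding a'_def b'_def using T T' by (simp_all add: sum_if_subset)
  moreover have "(\<Sum>t\<in>T \<union> T'. e t * t) = (\<Sum>t\<in>T \<union> T'. a' t * t) - y * (\<Sum>t\<in>T \<union> T'. b' t * t)"
    unfolding e_def by (simp add: left_diff_distrib sum_subtractf sum_distrib_left mult.assoc)
  ultimately have "(\<Sum>t\<in>T \<union> T'. e t * t) = 0" by simp
  moreover have a'X: "a' t \<in> X" and b'X: "b' t \<in> X" for t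
    unfolding a'_def b'_def using T(3) T'(3) subfield_0[OF X(1)] by auto
  then have "e t \<in> N" for t
    unfolding e_def using X(2) y(2) subfield_diff[OF N] subfield_mult[OF N] by blast
  ultimately have e0: "\<forall>t\<in>T \<union> T'. e t = 0"
    using li T(1,2) T'(1,2) unfolding lin_indep_over_def by blast
  obtain t' where t': "t' \<in> T'" "b t' \<noteq> 0"
    using T'(4) by (metis (no_types, lifting) mult_zero_left sum.neutral zero_neq_one)
  then have "a' t' = y * b' t'" using e0 unfolding e_def by simp
  then have "y = a' t' / b' t'" using t' unfolding b'_def by simp
  then show ?thesis using a'X b'X subfield_divide[OF X(1)] by simp
qed

context perfect_base
begin

lemma exists_relation_moving:
  assumes A: "finite A" and F: "subfield F" "K \<subseteq> F" and T: "T \<subseteq> F"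
    and c: "\<forall>t\<in>T. c t \<in> normal_closure A" "(\<Sum>t\<in>T. c t * t) = 0" and t1: "t1 \<in> T" "c t1 \<notin> F"
  obtains d where "\<forall>t\<in>T. d t \<in> normal_closure A" "(\<Sum>t\<in>T. d t * t) = 0" "d t1 \<noteq> 0"
    "\<And>t. c t \<in> F \<Longrightarrow> d t = 0"
proof -
  let ?N = "normal_closure A"
  have "c t1 \<in> ?N" using c(1) t1(1) by blast
  obtain \<sigma> D where \<sigma>: "subfield D" "hom_on D \<sigma>" "F \<subseteq> D" "?N \<subseteq> D" "\<And>f. f \<in> F \<Longrightarrow> \<sigma> f = f"
    "\<sigma> ` ?N = ?N" "\<sigma> (c t1) \<noteq> c t1"
    by (rule exists_hom_moving[OF A F \<open>c t1 \<in> ?N\<close> t1(2)]) blast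
  define d where "d t = \<sigma> (c t) - c t" for t
  have "(\<Sum>t\<in>T. d t * t) = 0"
    unfolding d_def using T \<sigma>(3,4) c(1) \<sigma>(5) by (intro hom_on_relation_diff[OF \<sigma>(1,2) _ _ _ c(2)]) auto
  moreover have "\<forall>t\<in>T. d t \<in> ?N"
    unfolding d_def using c(1) \<sigma>(6) subfield_diff[OF normal_closure_subfield] by blast
  moreover have "d t1 \<noteq> 0" using \<sigma>(7) unfolding d_def by simp
  moreover have "d t = 0" if "c t \<in> F" for t using \<sigma>(5)[OF that] unfolding d_def by simp
  ultimately show thesis using that by blast
qed

lemma normal_closure_lin_disjoint:
  assumes A: "finite A" and F: "subfield F" "K \<subseteq> F" and disj: "normal_closure A \<inter> F = K"
    and T: "finite T" "T \<subseteq> F" "lin_indep_over K T"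
  shows "(\<forall>t\<in>T. c t \<in> normal_closure A) \<Longrightarrow> (\<Sum>t\<in>T. c t * t) = 0 \<Longrightarrow> \<forall>t\<in>T. c t = 0"
proof (induction "card {t\<in>T. c t \<noteq> 0}" arbitrary: c rule: less_induct)
  case less
  show ?case
  proof (rule ccontr)
    assume "\<not> (\<forall>t\<in>T. c t = 0)"
    then obtain t0 where t0: "t0 \<in> T" "c t0 \<noteq> 0" by blast
    define c' where "c' t = c t / c t0" for t
    have c'N: "\<forall>t\<in>T. c' t \<in> normal_closure A"
      unfolding c'_def using less.prems(1) t0(1) subfield_divide[OF normal_closure_subfield] by blast
    have c'0: "(\<Sum>t\<in>T. c' t * t) = 0"
      unfolding c'_def using less.prems(2) by (simp add: sum_divide_distrib[symmetric] times_divide_eq_left)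
    have "c' t0 = 1" unfolding c'_def using t0(2) by simp
    show False
    proof (cases "\<forall>t\<in>T. c' t \<in> K")
      case True
      then have "c' t0 = 0"
        using T c'0 t0(1) by (intro T(3)[unfolded lin_indep_over_def, rule_format, of T c' t0]) auto
      then show False using \<open>c' t0 = 1\<close> by simp
    next
      case False
      then obtain t1 where t1: "t1 \<in> T" "c' t1 \<notin> K" by blast
      have "c' t1 \<notin> F" using t1 c'N disj by blast
      obtain d where d: "\<forall>t\<in>T. d t \<in> normal_closure A" "(\<Sum>t\<in>T. d t * t) = 0" "d t1 \<noteq> 0"
        "\<And>t. c' t \<in> F \<Longrightarrow> d t = 0"
        by (rule exists_relation_moving[OF A F T(2) c'N c'0 t1(1) \<open>c' t1 \<notin> F\<close>]) blast
      have "c t \<noteq> 0 \<and> t \<noteq> t0" if "d t \<noteq> 0" for t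
      proof -
        have "c' t \<noteq> 0" "c' t \<noteq> 1" using d(4) that subfield_0[OF F(1)] subfield_1[OF F(1)] by auto
        then show ?thesis using \<open>c' t0 = 1\<close> unfolding c'_def by auto
      qed
      then have "card {t\<in>T. d t \<noteq> 0} < card {t\<in>T. c t \<noteq> 0}"
        using t0 T(1) by (intro psubset_card_mono) auto
      then have "\<forall>t\<in>T. d t = 0" using less.hyps d(1,2) by blast
      then show False using t1(1) d(3) by simp
    qed
  qed
qed

lemma lin_indep_over_normal_closure:
  assumes "finite A" "subfield F" "K \<subseteq> F" "normal_closure A \<inter> F = K" "T \<subseteq> F" "lin_indep_over K T"
  shows "lin_indep_over (normal_closure A) T"
  unfolding lin_indep_over_def
proof (intro allI impI)
  fix T' c assume "finite T'" "T' \<subseteq> T" "\<forall>t\<in>T'. c t \<in> normal_closure A" "(\<Sum>t\<in>T'. c t * t) = 0"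
  moreover have "lin_indep_over K T'" using assms(6) \<open>T' \<subseteq> T\<close> unfolding lin_indep_over_def by blast
  ultimately show "\<forall>t\<in>T'. c t = 0"
    using normal_closure_lin_disjoint[OF assms(1-4), of T'] assms(5) by blast
qed

lemma adjoin_Un_subset_span:
  assumes X: "subfield X" "K \<subseteq> X" and F: "subfield F" and BF: "finite BF" "BF \<subseteq> F" "span_over K BF = F"
  shows "adjoin K (X \<union> F) \<subseteq> span_over X BF"
proof -
  let ?V = "span_over X BF"
  have FV: "F \<subseteq> ?V" using span_over_mono_field[OF X(2), of BF] BF(3) by simp
  have V: "subspace_over X ?V" by (rule span_over_subspace[OF X(1)])
  have "s * t \<in> ?V" if "s \<in> BF" "t \<in> BF" for s t
    using subfield_mult[OF F] that BF(2) FV by blast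
  then have mult: "u * w \<in> ?V" if "u \<in> ?V" "w \<in> ?V" for u w
    using span_over_mult[OF X(1) _ that] by blast
  have "x * 1 \<in> ?V" if "x \<in> X" for x
    using span_over_smult[OF X(1) that] FV subfield_1[OF F] by blast
  then have XV: "X \<subseteq> ?V" by auto
  have add: "u + w \<in> ?V" if "u \<in> ?V" "w \<in> ?V" for u w
    using V that unfolding subspace_over_def by blast
  have alg: "algebraic_over X s" for s using algebraic_over_extension[OF X(2)] .
  have "adjoin X BF \<subseteq> ?V"
    using adjoin_subset_ring[OF X(1) XV BF(1) span_over_superset[OF X(1)] alg add mult] .
  moreover have KXB: "K \<subseteq> adjoin X BF" using X(2) base_subset_adjoin[of X BF] by blast
  have "F \<subseteq> adjoin X BF"
    unfolding BF(3)[symmetric]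
    by (rule span_over_least[OF subfield_K subfield_subspace_over[OF adjoin_subfield KXB] gens_subset_adjoin])
  then have "X \<union> F \<subseteq> adjoin X BF" using base_subset_adjoin[of X BF] by blast
  then have "adjoin K (X \<union> F) \<subseteq> adjoin X BF" by (rule adjoin_least[OF adjoin_subfield KXB])
  ultimately show ?thesis by blast
qed

lemma adjoin_Un_Int_normal_closure:
  assumes A: "finite A" and galF: "galois_ext K F" and disj: "normal_closure A \<inter> F = K"
    and X: "subfield X" "K \<subseteq> X" "X \<subseteq> normal_closure A"
  shows "adjoin K (X \<union> F) \<inter> normal_closure A = X"
proof
  have F: "subfield F" "K \<subseteq> F" using galF unfolding galois_ext_def finite_ext_def by auto
  obtain BF where BF: "finite BF" "BF \<subseteq> F" "lin_indep_over K BF" "span_over K BF = F"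
    by (rule galois_ext_normal_closure_basis[OF galF])
  have li: "lin_indep_over (normal_closure A) BF"
    by (rule lin_indep_over_normal_closure[OF A F disj BF(2,3)])
  have "1 \<in> span_over X BF"
    using span_over_mono_field[OF X(2), of BF] BF(4) subfield_1[OF F(1)] by auto
  show "adjoin K (X \<union> F) \<inter> normal_closure A \<subseteq> X"
  proof
    fix y assume y: "y \<in> adjoin K (X \<union> F) \<inter> normal_closure A"
    then have "y \<in> span_over X BF" using adjoin_Un_subset_span[OF X(1,2) F(1) BF(1,2,4)] by blast
    then show "y \<in> X"
      using mem_if_span_lin_indep[OF X(1,3) normal_closure_subfield li _ _ \<open>1 \<in> span_over X BF\<close>] y by blast
  qed
  show "X \<subseteq> adjoin K (X \<union> F) \<inter> normal_closure A"
    using X(3) gens_subset_adjoin[of "X \<union> F" K] by blast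
qed

lemma normal_closure_Un: "normal_closure (A \<union> B) = adjoin K (normal_closure A \<union> normal_closure B)"
proof -
  have "adjoin K (normal_closure A \<union> normal_closure B) =
      adjoin K ((\<Union>x\<in>A. conjugates x) \<union> normal_closure B)"
    unfolding normal_closure_def by (rule adjoin_adjoin_Un)
  also have "\<dots> = adjoin K ((\<Union>x\<in>B. conjugates x) \<union> (\<Union>x\<in>A. conjugates x))"
    unfolding normal_closure_def Un_commute[of _ "adjoin K (\<Union>x\<in>B. conjugates x)"]
    by (rule adjoin_adjoin_Un)
  finally show ?thesis unfolding normal_closure_def by (simp add: Un_commute)
qed

end
section \<open>Strong cluster magnification\<close>

lemma compositum_pair: "compositum K {E, F} = adjoin K (E \<union> F)"
  unfolding compositum_eq_adjoin by simp

lemma compositum_image_compositum_pair: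
  assumes "\<B> \<noteq> {}"
  shows "compositum K ((\<lambda>E. compositum K {E, F}) ` \<B>) = compositum K {compositum K \<B>, F}"
proof -
  have "compositum K {compositum K \<B>, F} = adjoin K (\<Union>\<B> \<union> F)"
    by (simp add: compositum_eq_adjoin adjoin_adjoin_Un)
  moreover have "compositum K ((\<lambda>E. compositum K {E, F}) ` \<B>) = adjoin K (\<Union>\<B> \<union> F)"
    unfolding compositum_pair unfolding compositum_eq_adjoin
  proof (rule antisym)
    have "adjoin K (E \<union> F) \<subseteq> adjoin K (\<Union>\<B> \<union> F)" if "E \<in> \<B>" for E
      using that by (intro adjoin_mono) auto
    then show "adjoin K (\<Union>E\<in>\<B>. adjoin K (E \<union> F)) \<subseteq> adjoin K (\<Union>\<B> \<union> F)"
      by (intro adjoin_least adjoin_subfield base_subset_adjoin) blast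
    have "E \<union> F \<subseteq> adjoin K (E \<union> F)" for E by (rule gens_subset_adjoin)
    then have "\<Union>\<B> \<union> F \<subseteq> (\<Union>E\<in>\<B>. adjoin K (E \<union> F))" using assms by blast
    then show "adjoin K (\<Union>\<B> \<union> F) \<subseteq> adjoin K (\<Union>E\<in>\<B>. adjoin K (E \<union> F))"
      by (rule adjoin_mono[OF order_refl])
  qed
  ultimately show ?thesis by simp
qed

locale magnification = perfect_base K for K :: "'a::field set" +
  fixes L F M :: "'a set"
  assumes magnification: "strong_cluster_magnification K L F M"
begin

abbreviation magnify :: "'a set \<Rightarrow> 'a set" where
  "magnify E \<equiv> compositum K {E, F}"

lemma finite_ext_L: "finite_ext K L"
  and galois_ext_F: "galois_ext K F"
  and degree_L: "2 < ext_degree K L"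
  and closure_Int_F: "galois_closure K L \<inter> F = K"
  and M_eq: "M = adjoin K (L \<union> F)"
  using magnification compositum_pair unfolding strong_cluster_magnification_def by auto

lemma subfield_L: "subfield L" and K_subset_L: "K \<subseteq> L"
  using finite_ext_L unfolding finite_ext_def by auto

lemma galois_closure_L_eq:
  obtains A where "finite A" "A \<subseteq> L" "adjoin K A = L" "galois_closure K L = normal_closure A"
proof -
  obtain A where A: "finite A" "A \<subseteq> L" "adjoin K A = L"
    using finite_ext_basis[OF finite_ext_L] by blast
  then show thesis using that galois_closure_eq_normal_closure[of A L] by simp
qed

lemma galois_closure_L:
  "subfield (galois_closure K L)" "K \<subseteq> galois_closure K L" "L \<subseteq> galois_closure K L"
proof -
  obtain A where "galois_closure K L = normal_closure A" by (rule galois_closure_L_eq)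
  then show "subfield (galois_closure K L)" "K \<subseteq> galois_closure K L"
    using normal_closure_subfield K_subset_normal_closure by simp_all
  show "L \<subseteq> galois_closure K L" unfolding galois_closure_def by blast
qed

lemma conj_fields_subset_closure:
  assumes "E \<in> conj_fields K L"
  shows "E \<subseteq> galois_closure K L"
proof -
  obtain \<sigma> where \<sigma>: "K_iso K \<sigma> L E" using assms unfolding conj_fields_def by blast
  obtain A where A: "finite A" "A \<subseteq> L" "adjoin K A = L" "galois_closure K L = normal_closure A"
    by (rule galois_closure_L_eq)
  have hom: "hom_on L \<sigma>" and fixK: "\<And>k. k \<in> K \<Longrightarrow> \<sigma> k = k"
    using K_iso_hom_on[OF \<sigma>] K_iso_fixes[OF \<sigma>] by auto
  have "\<sigma> ` adjoin K A = adjoin K (\<sigma> ` A)"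
    by (rule hom_on_image_adjoin[OF subfield_L hom]) (simp_all add: A(3) fixK)
  then have "E = adjoin K (\<sigma> ` A)" using K_iso_image[OF \<sigma>] A(3) by simp
  also have "\<dots> \<subseteq> normal_closure A"
  proof (rule adjoin_least[OF normal_closure_subfield K_subset_normal_closure])
    have "\<sigma> a \<in> conjugates a" if "a \<in> A" for a
      using hom_on_conjugate[OF subfield_L hom K_subset_L fixK] that A(2) by blast
    then show "\<sigma> ` A \<subseteq> normal_closure A" using conjugates_subset_normal_closure by blast
  qed
  finally show ?thesis using A(4) by simp
qed

lemma magnify_Int_closure:
  assumes "subfield X" "K \<subseteq> X" "X \<subseteq> galois_closure K L"
  shows "magnify X \<inter> galois_closure K L = X"
proof -
  obtain A where A: "finite A" "galois_closure K L = normal_closure A" by (rule galois_closure_L_eq)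
  show ?thesis
    using adjoin_Un_Int_normal_closure[OF A(1) galois_ext_F] closure_Int_F assms
    unfolding compositum_pair A(2) by blast
qed

lemma galois_closure_M: "galois_closure K M = magnify (galois_closure K L)"
proof -
  obtain A where A: "finite A" "A \<subseteq> L" "adjoin K A = L" "galois_closure K L = normal_closure A"
    by (rule galois_closure_L_eq)
  obtain BF where BF: "finite BF" "BF \<subseteq> F" "lin_indep_over K BF" "span_over K BF = F"
    "F = normal_closure BF"
    by (rule galois_ext_normal_closure_basis[OF galois_ext_F])
  have "F \<subseteq> adjoin K BF"
    unfolding BF(4)[symmetric]
    by (rule span_over_least[OF subfield_K subfield_subspace_over[OF adjoin_subfield base_subset_adjoin]
          gens_subset_adjoin])
  then have "L \<union> F \<subseteq> adjoin K (A \<union> BF)"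
    using A(3) adjoin_mono[of K K A "A \<union> BF"] adjoin_mono[of K K BF "A \<union> BF"] by blast
  then have "M \<subseteq> adjoin K (A \<union> BF)" unfolding M_eq by (rule adjoin_least[OF adjoin_subfield base_subset_adjoin])
  moreover have "A \<union> BF \<subseteq> M" using A(2) BF(2) gens_subset_adjoin[of "L \<union> F" K] M_eq by blast
  ultimately have "galois_closure K M = normal_closure (A \<union> BF)"
    using A(1) BF(1) by (intro galois_closure_eq_normal_closure) auto
  also have "\<dots> = magnify (galois_closure K L)"
    unfolding normal_closure_Un compositum_pair A(4) BF(5)[symmetric] by (rule refl)
  finally show ?thesis .
qed

lemma magnify_conj_fields:
  assumes "E \<in> conj_fields K L"
  shows "magnify E \<in> conj_fields K M"
proof -
  obtain \<sigma> where \<sigma>: "K_iso K \<sigma> L E" using assms unfolding conj_fields_def by blast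
  obtain BF where BF: "finite BF" "BF \<subseteq> F" "lin_indep_over K BF" "span_over K BF = F"
    "F = normal_closure BF"
    by (rule galois_ext_normal_closure_basis[OF galois_ext_F])
  define D where "D = adjoin L (\<Union>x\<in>BF. conjugates x)"
  have "finite (\<Union>x\<in>BF. conjugates x)" using BF(1) finite_conjugates by blast
  then obtain \<tau> where \<tau>: "hom_on D \<tau>" "\<forall>z\<in>L. \<tau> z = \<sigma> z"
    unfolding D_def using hom_on_extend_adjoin[OF alg_closed subfield_L K_iso_hom_on[OF \<sigma>]]
      algebraic_over_extension[OF K_subset_L] by blast
  have D: "subfield D" "L \<subseteq> D" unfolding D_def by (rule adjoin_subfield, rule base_subset_adjoin)
  have fixK: "\<tau> k = k" if "k \<in> K" for k using \<tau>(2) K_iso_fixes[OF \<sigma> that] K_subset_L that by auto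
  have FD: "F \<subseteq> D" unfolding BF(5) normal_closure_def D_def by (rule adjoin_mono[OF K_subset_L order_refl])
  have "\<tau> ` F = F" using hom_on_image_normal_closure[OF D(1) \<tau>(1) fixK BF(1)] FD BF(5) by simp
  moreover have "\<tau> ` L = E" using K_iso_image[OF \<sigma>] \<tau>(2) by (simp cong: image_cong)
  moreover have MD: "M \<subseteq> D"
    unfolding M_eq using D FD K_subset_L by (intro adjoin_least) auto
  moreover have "\<tau> ` adjoin K (L \<union> F) = adjoin K (\<tau> ` (L \<union> F))"
    using MD unfolding M_eq by (rule hom_on_image_adjoin[OF D(1) \<tau>(1) _ fixK])
  ultimately have "\<tau> ` M = adjoin K (E \<union> F)" unfolding M_eq by (simp add: image_Un)
  then have "\<tau> ` M = magnify E" unfolding compositum_pair .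
  then have "K_iso K \<tau> M (magnify E)" using K_iso_restrict[OF D(1) \<tau>(1) MD _ fixK] by blast
  then show ?thesis
    unfolding conj_fields_def compositum_pair using adjoin_subfield base_subset_adjoin by blast
qed

lemma magnify_inj_on: "inj_on magnify (conj_fields K L)"
proof (rule inj_onI)
  fix E1 E2 assume E: "E1 \<in> conj_fields K L" "E2 \<in> conj_fields K L" "magnify E1 = magnify E2"
  have E_int: "magnify E \<inter> galois_closure K L = E" if "E \<in> conj_fields K L" for E
    using that conj_fields_subset_closure unfolding conj_fields_def by (intro magnify_Int_closure) auto
  have "E1 = magnify E1 \<inter> galois_closure K L" using E_int[OF E(1)] by simp
  also have "\<dots> = E2" using E(3) E_int[OF E(2)] by simp
  finally show "E1 = E2" .
qed

lemma compositum_conj_fields: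
  assumes "\<B> \<subseteq> conj_fields K L"
  shows "subfield (compositum K \<B>)" "K \<subseteq> compositum K \<B>" "compositum K \<B> \<subseteq> galois_closure K L"
proof -
  have "\<Union>\<B> \<subseteq> galois_closure K L" using assms conj_fields_subset_closure by blast
  then show "compositum K \<B> \<subseteq> galois_closure K L"
    unfolding compositum_eq_adjoin by (rule adjoin_least[OF galois_closure_L(1,2)])
qed (simp_all add: compositum_eq_adjoin adjoin_subfield base_subset_adjoin)

lemma magnify_generates_iff:
  assumes "\<B> \<subseteq> conj_fields K L"
  shows "compositum K (magnify ` \<B>) = galois_closure K M \<longleftrightarrow> compositum K \<B> = galois_closure K L"
proof (cases "\<B> = {}")
  case True
  obtain l where "l \<in> L" "l \<notin> K" using ext_degree_gt_1_not_subset[of K L] degree_L by auto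
  moreover have "galois_closure K L \<subseteq> galois_closure K M"
    unfolding galois_closure_M compositum_pair using gens_subset_adjoin by blast
  moreover note galois_closure_L(3)
  ultimately show ?thesis
    using True adjoin_empty[OF subfield_K] unfolding compositum_eq_adjoin by auto
next
  case False
  let ?N = "galois_closure K L" and ?X = "compositum K \<B>"
  have "compositum K (magnify ` \<B>) = galois_closure K M \<longleftrightarrow> magnify ?X = magnify ?N"
    using compositum_image_compositum_pair[OF False] galois_closure_M by simp
  also have "\<dots> \<longleftrightarrow> ?X = ?N"
  proof
    assume "magnify ?X = magnify ?N"
    then have "magnify ?X \<inter> ?N = magnify ?N \<inter> ?N" by simp
    then show "?X = ?N"
      using magnify_Int_closure[OF compositum_conj_fields[OF assms]]
        magnify_Int_closure[OF galois_closure_L(1,2) order_refl] by simp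
  qed simp
  finally show ?thesis .
qed

end
context magnification
begin

lemma minimal_generating_set_magnify:
  assumes B: "\<B> \<subseteq> conj_fields K L"
  shows "minimal_generating_set K L \<B> \<longleftrightarrow> minimal_generating_set K M (magnify ` \<B>)"
proof -
  have inj: "inj_on magnify \<B>" using magnify_inj_on B by (rule inj_on_subset)
  have minimal_iff: "(\<forall>\<B>'. \<B>' \<subset> magnify ` \<B> \<longrightarrow> compositum K \<B>' \<noteq> galois_closure K M) \<longleftrightarrow>
      (\<forall>\<B>'. \<B>' \<subset> \<B> \<longrightarrow> compositum K \<B>' \<noteq> galois_closure K L)"
  proof (intro iffI allI impI)
    fix \<B>' assume min: "\<forall>\<B>''. \<B>'' \<subset> magnify ` \<B> \<longrightarrow> compositum K \<B>'' \<noteq> galois_closure K M"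
      and sub: "\<B>' \<subset> \<B>"
    have "magnify ` \<B>' \<subset> magnify ` \<B>" using inj sub by (rule image_strict_mono)
    then have "compositum K (magnify ` \<B>') \<noteq> galois_closure K M" by (rule min[rule_format])
    moreover have "\<B>' \<subseteq> conj_fields K L" using sub B by blast
    ultimately show "compositum K \<B>' \<noteq> galois_closure K L" by (simp add: magnify_generates_iff)
  next
    fix \<B>'' assume min: "\<forall>\<B>'. \<B>' \<subset> \<B> \<longrightarrow> compositum K \<B>' \<noteq> galois_closure K L"
      and sub: "\<B>'' \<subset> magnify ` \<B>"
    then have "\<B>'' \<subseteq> magnify ` \<B>" by blast
    then obtain \<B>' where \<B>': "\<B>' \<subseteq> \<B>" "\<B>'' = magnify ` \<B>'" unfolding subset_image_iff by blast
    then have "\<B>' \<subset> \<B>" using sub by blast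
    then have "compositum K \<B>' \<noteq> galois_closure K L" by (rule min[rule_format])
    moreover have "\<B>' \<subseteq> conj_fields K L" using \<B>'(1) B by blast
    ultimately show "compositum K \<B>'' \<noteq> galois_closure K M" by (simp add: \<B>'(2) magnify_generates_iff)
  qed
  have "magnify ` \<B> \<subseteq> conj_fields K M" using B magnify_conj_fields by blast
  then have "minimal_generating_set K M (magnify ` \<B>) \<longleftrightarrow>
      compositum K (magnify ` \<B>) = galois_closure K M \<and>
      (\<forall>\<B>'. \<B>' \<subset> magnify ` \<B> \<longrightarrow> compositum K \<B>' \<noteq> galois_closure K M)"
    by (simp add: minimal_generating_set_def)
  moreover have "minimal_generating_set K L \<B> \<longleftrightarrow> compositum K \<B> = galois_closure K L \<and>
      (\<forall>\<B>'. \<B>' \<subset> \<B> \<longrightarrow> compositum K \<B>' \<noteq> galois_closure K L)"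
    using B by (simp add: minimal_generating_set_def)
  ultimately show ?thesis by (simp only: minimal_iff magnify_generates_iff[OF B])
qed

end

theorem mainTheorem8:
  fixes K L F M :: "'a::field set" and B :: "'a set set"
  assumes "is_alg_closure_of K"
    and "perfect_subfield K"
    and "strong_cluster_magnification K L F M"
    and "B \<subseteq> conj_fields K L"
  shows "(minimal_generating_set K L B \<longleftrightarrow>
           minimal_generating_set K M ((\<lambda>E. compositum K {E, F}) ` B))
         \<and> (minimal_generating_set K L B \<longrightarrow>
              card B = card ((\<lambda>E. compositum K {E, F}) ` B))"
proof -
  interpret magnification K L F M by unfold_locales (rule assms)+
  have "inj_on magnify B" using magnify_inj_on assms(4) by (rule inj_on_subset)
  then show ?thesis using minimal_generating_set_magnify[OF assms(4)] by (simp add: card_image)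
qed

end
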